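(* Let $\mathfrak{g}$ be a $(2k+1)$-dimensional Heisenberg Lie algebra ($k\ge1$). Then: (i) $\mathfrak{g}$ carries a Ricci flat Lorentzian inner product if and only if $k=1$; (ii) for every integer $q$ with $2\le q\le k$, $\mathfrak{g}$ carries a Ricci flat pseudo-Euclidean inner product of signature $(q,2k+1-q)$.
   Context: A Heisenberg Lie algebra is a real 2-step nilpotent Lie algebra of dimension $2k+1$ whose center is one-dimensional and coincides with its derived ideal. A pseudo-Euclidean inner product of signature $(a,b)$ is a nondegenerate symmetric bilinear form with $a$ negative and $b$ positive directions; Lorentzian means signature $(1,n-1)$. For an inner product $\langle\cdot,\cdot\rangle$ on a Lie algebra, the Levi-Civita product is $2\langle\mathcal{D}_uv,w\rangle=\langle[u,v],w\rangle+\langle[w,u],v\rangle+\langle[w,v],u\rangle$, the curvature $\mathcal{R}(u,v)w=\mathcal{D}_{[u,v]}w-\mathcal{D}_u\mathcal{D}_vw+\mathcal{D}_v\mathcal{D}_uw$, and the Ricci curvature $\mathfrak{r}(u,v)=\mathrm{tr}(w\mapsto\mathcal{R}(u,w)v)$; the inner product is Ricci flat if $\mathfrak{r}=0$. *)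

theory Defs
  imports "HOL-Analysis.Analysis"
begin

definition lie_algebra :: "('v::euclidean_space \<Rightarrow> 'v \<Rightarrow> 'v) \<Rightarrow> bool" where
  "lie_algebra B \<longleftrightarrow> bilinear B \<and> (\<forall>x. B x x = 0) \<and>
     (\<forall>x y z. B x (B y z) + B y (B z x) + B z (B x y) = 0)"

definition lie_center :: "('v::euclidean_space \<Rightarrow> 'v \<Rightarrow> 'v) \<Rightarrow> 'v set" where
  "lie_center B = {z. \<forall>x. B z x = 0}"

definition derived_ideal :: "('v::euclidean_space \<Rightarrow> 'v \<Rightarrow> 'v) \<Rightarrow> 'v set" where
  "derived_ideal B = span {B x y | x y. True}"

definition heisenberg :: "('v::euclidean_space \<Rightarrow> 'v \<Rightarrow> 'v) \<Rightarrow> bool" where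
  "heisenberg B \<longleftrightarrow> lie_algebra B \<and>
     (\<forall>x y z. B (B x y) z = 0) \<and> (\<exists>x y. B x y \<noteq> 0) \<and>
     dim (lie_center B) = 1 \<and> lie_center B = derived_ideal B"

definition pseudo_inner :: "('v::euclidean_space \<Rightarrow> 'v \<Rightarrow> real) \<Rightarrow> bool" where
  "pseudo_inner g \<longleftrightarrow> bilinear g \<and> (\<forall>x y. g x y = g y x) \<and>
     (\<forall>x. (\<forall>y. g x y = 0) \<longrightarrow> x = 0)"

definition neg_index :: "('v::euclidean_space \<Rightarrow> 'v \<Rightarrow> real) \<Rightarrow> nat" where
  "neg_index g = Max {dim S | S. subspace S \<and> (\<forall>x\<in>S. x \<noteq> 0 \<longrightarrow> g x x < 0)}"

definition has_signature :: "('v::euclidean_space \<Rightarrow> 'v \<Rightarrow> real) \<Rightarrow> nat \<Rightarrow> nat \<Rightarrow> bool" where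
  "has_signature g a b \<longleftrightarrow> pseudo_inner g \<and> neg_index g = a \<and> a + b = DIM('v)"

definition lorentzian :: "('v::euclidean_space \<Rightarrow> 'v \<Rightarrow> real) \<Rightarrow> bool" where
  "lorentzian g \<longleftrightarrow> has_signature g 1 (DIM('v) - 1)"

text \<open>Levi-Civita product, determined by the Koszul formula.\<close>
definition levi_civita ::
  "('v::euclidean_space \<Rightarrow> 'v \<Rightarrow> 'v) \<Rightarrow> ('v \<Rightarrow> 'v \<Rightarrow> real) \<Rightarrow> 'v \<Rightarrow> 'v \<Rightarrow> 'v" where
  "levi_civita B g u v = (THE w. \<forall>z. 2 * g w z = g (B u v) z + g (B z u) v + g (B z v) u)"

definition curvature ::
  "('v::euclidean_space \<Rightarrow> 'v \<Rightarrow> 'v) \<Rightarrow> ('v \<Rightarrow> 'v \<Rightarrow> real) \<Rightarrow> 'v \<Rightarrow> 'v \<Rightarrow> 'v \<Rightarrow> 'v" where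
  "curvature B g u v w =
     levi_civita B g (B u v) w - levi_civita B g u (levi_civita B g v w)
     + levi_civita B g v (levi_civita B g u w)"

text \<open>Trace of an endomorphism (basis-independent for linear maps).\<close>
definition trace_map :: "('v::euclidean_space \<Rightarrow> 'v) \<Rightarrow> real" where
  "trace_map f = (\<Sum>b\<in>Basis. f b \<bullet> b)"

definition ricci ::
  "('v::euclidean_space \<Rightarrow> 'v \<Rightarrow> 'v) \<Rightarrow> ('v \<Rightarrow> 'v \<Rightarrow> real) \<Rightarrow> 'v \<Rightarrow> 'v \<Rightarrow> real" where
  "ricci B g u v = trace_map (\<lambda>w. curvature B g u w v)"

definition ricci_flat :: "('v::euclidean_space \<Rightarrow> 'v \<Rightarrow> 'v) \<Rightarrow> ('v \<Rightarrow> 'v \<Rightarrow> real) \<Rightarrow> bool" where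
  "ricci_flat B g \<longleftrightarrow> (\<forall>u v. ricci B g u v = 0)"

end

theory Submission
  imports Defs
begin

text \<open>Write the bracket as \<open>[x, y] = \<omega>(x, y) z\<close>, where \<open>z\<close> spans the centre, and represent
  \<open>\<omega>\<close> through the metric by \<open>g(J x, y) = \<omega>(x, y)\<close>. Solving the Koszul formula gives the
  Levi-Civita product explicitly, and the Ricci tensor becomes
  \<open>ric(u, v) = g(z,z)/4 (\<omega>(J u, v) - \<omega>(u, J v) - \<omega>(u, v) tr J) - g(z,u) g(z,v) tr(J\<^sup>2)/4\<close>.
  Hence \<open>g\<close> is Ricci flat iff \<open>z\<close> is null and \<open>tr(J\<^sup>2) = 0\<close>.

  For a Lorentzian metric with null centre, the orthogonal complement of a hyperbolic pair
  \<open>(z, u)\<close> is positive definite and \<open>tr(J\<^sup>2)\<close> is minus a sum of squares of the entries of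
  \<open>\<omega>\<close> on it; so \<open>\<omega>\<close> vanishes there, which leaves room for only one more dimension: \<open>k = 1\<close>.
  Conversely, from a Darboux basis of \<open>\<omega>\<close> one writes down orthonormal frames in which \<open>z\<close> is
  null and the weighted squares of \<open>\<omega>\<close> cancel, realising every index from 2 to \<open>2k - 1\<close>, and
  index 1 when \<open>k = 1\<close>.\<close>

section \<open>Heisenberg algebras\<close>

definition heis_form :: "('v::euclidean_space \<Rightarrow> 'v \<Rightarrow> 'v) \<Rightarrow> 'v \<Rightarrow> 'v \<Rightarrow> 'v \<Rightarrow> real" where
  "heis_form B z x y = (B x y \<bullet> z) / (z \<bullet> z)"

locale heisenberg_centre =
  fixes B :: "'v::euclidean_space \<Rightarrow> 'v \<Rightarrow> 'v" and z :: 'v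
  assumes bilinear_B: "bilinear B" and B_alt: "\<And>x. B x x = 0" and z_nonzero: "z \<noteq> 0"
    and B_eq_form: "\<And>x y. B x y = heis_form B z x y *\<^sub>R z"
    and center_in_span: "\<And>x. (\<forall>y. B x y = 0) \<Longrightarrow> x \<in> span {z}"
    and z_central: "\<And>y. B z y = 0"
    and B_nontrivial: "\<exists>x y. B x y \<noteq> 0"
begin

abbreviation \<omega> :: "'v \<Rightarrow> 'v \<Rightarrow> real" where "\<omega> x y \<equiv> heis_form B z x y"

lemma bilinear_\<omega>: "bilinear \<omega>"
  unfolding bilinear_def heis_form_def
  by (auto intro!: linearI simp: bilinear_radd[OF bilinear_B] bilinear_ladd[OF bilinear_B]
      bilinear_rmul[OF bilinear_B] bilinear_lmul[OF bilinear_B] inner_add_left add_divide_distrib)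

lemma linear_\<omega>_right: "linear (\<omega> a)" and linear_\<omega>_left: "linear (\<lambda>x. \<omega> x a)"
  using bilinear_\<omega> unfolding bilinear_def by auto

lemmas \<omega>_simps = bilinear_radd[OF bilinear_\<omega>] bilinear_ladd[OF bilinear_\<omega>]
  bilinear_rmul[OF bilinear_\<omega>, simplified] bilinear_lmul[OF bilinear_\<omega>, simplified]
  bilinear_rsub[OF bilinear_\<omega>] bilinear_lsub[OF bilinear_\<omega>]
  bilinear_rzero[OF bilinear_\<omega>] bilinear_lzero[OF bilinear_\<omega>]
  bilinear_rneg[OF bilinear_\<omega>] bilinear_lneg[OF bilinear_\<omega>]

lemma \<omega>_sum_right: "\<omega> a (\<Sum>i\<in>A. F i) = (\<Sum>i\<in>A. \<omega> a (F i))"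
  by (rule linear_sum[OF linear_\<omega>_right])

lemma \<omega>_sum_left: "\<omega> (\<Sum>i\<in>A. F i) a = (\<Sum>i\<in>A. \<omega> (F i) a)"
  using linear_sum[OF linear_\<omega>_left[of a]] by simp

lemma \<omega>_self [simp]: "\<omega> x x = 0"
  by (simp add: heis_form_def B_alt)

lemma \<omega>_skew: "\<omega> x y = - \<omega> y x"
proof -
  have "B y x + B x y = 0"
    using B_alt[of "x + y"] B_alt[of x] B_alt[of y]
    by (simp add: bilinear_radd[OF bilinear_B] bilinear_ladd[OF bilinear_B])
  then have "B x y = - B y x" by (simp add: eq_neg_iff_add_eq_0 add.commute)
  then show ?thesis by (simp add: heis_form_def)
qed

lemma \<omega>_z_left [simp]: "\<omega> z y = 0"
  by (simp add: heis_form_def z_central)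

lemma \<omega>_z_right [simp]: "\<omega> y z = 0"
  using \<omega>_skew[of y z] by simp

lemma \<omega>_radical: assumes "\<And>y. \<omega> x y = 0" shows "\<exists>t. x = t *\<^sub>R z"
proof -
  have "x \<in> span {z}" using assms B_eq_form by (intro center_in_span) simp
  then show ?thesis by (auto simp: span_singleton)
qed

end

lemma heisenberg_obtain_centre:
  assumes "heisenberg B"
  obtains z where "heisenberg_centre B z"
proof -
  have la: "lie_algebra B" and nontriv: "\<exists>x y. B x y \<noteq> 0" and dim1: "dim (lie_center B) = 1"
    and center_eq: "lie_center B = derived_ideal B"
    using assms unfolding heisenberg_def by auto
  have bil: "bilinear B" and alt: "\<And>x. B x x = 0" using la unfolding lie_algebra_def by auto
  have sub: "subspace (lie_center B)"
    unfolding lie_center_def subspace_def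
    by (auto simp: bilinear_lzero[OF bil] bilinear_ladd[OF bil] bilinear_lmul[OF bil])
  obtain C where C: "C \<subseteq> lie_center B" "independent C" "lie_center B \<subseteq> span C"
      "card C = dim (lie_center B)"
    using basis_exists by blast
  then obtain z where Cz: "C = {z}" using dim1 by (auto simp: card_Suc_eq)
  have z: "z \<noteq> 0" using C(2) Cz by auto
  have center: "lie_center B = span {z}"
    using C Cz sub by (metis span_minimal subset_antisym)
  have z_central: "\<And>y. B z y = 0" using C(1) Cz unfolding lie_center_def by auto
  have "B x y = heis_form B z x y *\<^sub>R z" for x y
  proof -
    have "B x y \<in> span {z}"
      using center_eq center unfolding derived_ideal_def by (auto intro: span_base)
    then obtain t where "B x y = t *\<^sub>R z" by (auto simp: span_singleton)
    then show ?thesis using z by (simp add: heis_form_def)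
  qed
  then have "heisenberg_centre B z"
    using bil alt z z_central nontriv center by unfold_locales (auto simp: lie_center_def)
  then show thesis by (rule that)
qed

section \<open>Traces and symmetric bilinear forms\<close>

lemma trace_map_add: "trace_map (\<lambda>x. F x + G x) = trace_map F + trace_map G"
  by (simp add: trace_map_def inner_add_left sum.distrib)

lemma trace_map_diff: "trace_map (\<lambda>x. F x - G x) = trace_map F - trace_map G"
  by (simp add: trace_map_def inner_diff_left sum_subtractf)

lemma trace_map_scale: "trace_map (\<lambda>x. c *\<^sub>R F x) = c * trace_map F"
  by (simp add: trace_map_def sum_distrib_left)

lemma trace_map_sum: "trace_map (\<lambda>x. \<Sum>i\<in>I. F i x) = (\<Sum>i\<in>I. trace_map (F i))"
  unfolding trace_map_def by (simp add: inner_sum_left sum.swap[of _ I])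

lemma trace_map_rank_one: assumes "linear f" shows "trace_map (\<lambda>x. f x *\<^sub>R v) = f v"
proof -
  have "trace_map (\<lambda>x. f x *\<^sub>R v) = (\<Sum>b\<in>Basis. f ((v \<bullet> b) *\<^sub>R b))"
    using linear_scale[OF assms] by (simp add: trace_map_def mult.commute)
  also have "\<dots> = f v"
    by (simp add: linear_sum[OF assms, symmetric] euclidean_representation)
  finally show ?thesis .
qed

lemma linear_functional_eq_inner:
  fixes f :: "'v::euclidean_space \<Rightarrow> real"
  assumes "linear f"
  shows "f y = (\<Sum>b\<in>Basis. f b *\<^sub>R b) \<bullet> y"
proof -
  have "f y = f (\<Sum>b\<in>Basis. (y \<bullet> b) *\<^sub>R b)" by (simp add: euclidean_representation)
  also have "\<dots> = (\<Sum>b\<in>Basis. (y \<bullet> b) * f b)"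
    by (simp add: linear_sum[OF assms] linear_scale[OF assms])
  also have "\<dots> = (\<Sum>b\<in>Basis. f b *\<^sub>R b) \<bullet> y"
    unfolding inner_sum_left by (rule sum.cong) (auto simp: mult.commute intro: inner_commute)
  finally show ?thesis .
qed

lemma pseudo_inner_represents:
  fixes g h :: "'v::euclidean_space \<Rightarrow> 'v \<Rightarrow> real"
  assumes "pseudo_inner g" "bilinear h"
  obtains J where "linear J" "\<And>x y. g (J x) y = h x y"
proof -
  have gb: "bilinear g" and nd: "\<And>x. (\<forall>y. g x y = 0) \<Longrightarrow> x = 0"
    using assms(1) unfolding pseudo_inner_def by auto
  define G where "G v = (\<Sum>b\<in>Basis. g v b *\<^sub>R b)" for v
  define H where "H v = (\<Sum>b\<in>Basis. h v b *\<^sub>R b)" for v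
  have gG: "g v y = G v \<bullet> y" for v y
    unfolding G_def by (rule linear_functional_eq_inner) (use gb in \<open>simp add: bilinear_def\<close>)
  have hH: "h v y = H v \<bullet> y" for v y
    unfolding H_def by (rule linear_functional_eq_inner) (use assms(2) in \<open>simp add: bilinear_def\<close>)
  have linG: "linear G" unfolding G_def
    by (rule linearI) (simp_all add: bilinear_ladd[OF gb] bilinear_lmul[OF gb] scaleR_add_left
        sum.distrib scaleR_sum_right)
  have linH: "linear H" unfolding H_def
    by (rule linearI) (simp_all add: bilinear_ladd[OF assms(2)] bilinear_lmul[OF assms(2)]
        scaleR_add_left sum.distrib scaleR_sum_right)
  have "inj G"
    using nd gG by (auto simp: linear_injective_0[OF linG])
  then obtain Gi where Gi: "linear Gi" "\<And>x. G (Gi x) = x"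
    using linear_surjective_isomorphism[OF linG] linear_injective_imp_surjective[OF linG] by metis
  show thesis
  proof (rule that[of "Gi \<circ> H"])
    show "linear (Gi \<circ> H)" by (rule linear_compose[OF linH Gi(1)])
    show "g ((Gi \<circ> H) x) y = h x y" for x y using Gi gG hH by simp
  qed
qed

lemma neg_index_ge:
  fixes g :: "'v::euclidean_space \<Rightarrow> 'v \<Rightarrow> real"
  assumes "subspace S" "\<forall>x\<in>S. x \<noteq> 0 \<longrightarrow> g x x < 0"
  shows "dim S \<le> neg_index g"
  unfolding neg_index_def
proof (rule Max_ge)
  show "finite {dim S |S. subspace S \<and> (\<forall>x\<in>S. x \<noteq> 0 \<longrightarrow> g x x < 0)}"
    by (rule finite_subset[of _ "{..DIM('v)}"]) (auto simp: dim_subset_UNIV)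
qed (use assms in blast)

lemma neg_index_le:
  fixes g :: "'v::euclidean_space \<Rightarrow> 'v \<Rightarrow> real"
  assumes "\<And>S. subspace S \<Longrightarrow> \<forall>x\<in>S. x \<noteq> 0 \<longrightarrow> g x x < 0 \<Longrightarrow> dim S \<le> n"
  shows "neg_index g \<le> n"
  unfolding neg_index_def
proof (rule Max.boundedI)
  show "finite {dim S |S. subspace S \<and> (\<forall>x\<in>S. x \<noteq> 0 \<longrightarrow> g x x < 0)}"
    by (rule finite_subset[of _ "{..DIM('v)}"]) (auto simp: dim_subset_UNIV)
  have "dim {0::'v} \<in> {dim S |S. subspace S \<and> (\<forall>x\<in>S. x \<noteq> 0 \<longrightarrow> g x x < 0)}"
    by (intro CollectI exI[of _ "{0}"]) (simp add: subspace_0)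
  then show "{dim S |S. subspace S \<and> (\<forall>x\<in>S. x \<noteq> 0 \<longrightarrow> g x x < 0)} \<noteq> {}" by auto
next
  fix d assume "d \<in> {dim S |S. subspace S \<and> (\<forall>x\<in>S. x \<noteq> 0 \<longrightarrow> g x x < 0)}"
  then obtain S where "d = dim S" "subspace S" "\<forall>x\<in>S. x \<noteq> 0 \<longrightarrow> g x x < 0" by auto
  then show "d \<le> n" using assms by simp
qed

locale sym_form =
  fixes g :: "'v::euclidean_space \<Rightarrow> 'v \<Rightarrow> real"
  assumes bilinear_g: "bilinear g" and g_sym: "\<And>x y. g x y = g y x"
begin

lemma linear_g_right: "linear (g a)" and linear_g_left: "linear (\<lambda>x. g x a)"
  using bilinear_g unfolding bilinear_def by auto

lemmas g_simps = bilinear_radd[OF bilinear_g] bilinear_ladd[OF bilinear_g]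
  bilinear_rmul[OF bilinear_g, simplified] bilinear_lmul[OF bilinear_g, simplified]
  bilinear_rsub[OF bilinear_g] bilinear_lsub[OF bilinear_g]
  bilinear_rzero[OF bilinear_g] bilinear_lzero[OF bilinear_g]
  bilinear_rneg[OF bilinear_g] bilinear_lneg[OF bilinear_g]

lemma g_sum_right: "g a (\<Sum>v\<in>V. c v *\<^sub>R v) = (\<Sum>v\<in>V. c v * g a v)"
  by (simp add: linear_sum[OF linear_g_right] linear_scale[OF linear_g_right])

lemma g_sum_left: "g (\<Sum>v\<in>V. c v *\<^sub>R v) a = (\<Sum>v\<in>V. c v * g v a)"
  by (simp add: linear_sum[OF linear_g_left] linear_scale[OF linear_g_left])

definition orthogonal_set :: "'v set \<Rightarrow> bool" where
  "orthogonal_set V \<longleftrightarrow> (\<forall>v\<in>V. \<forall>v'\<in>V. v \<noteq> v' \<longrightarrow> g v v' = 0)"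

definition orth_compl :: "'v set \<Rightarrow> 'v set" where
  "orth_compl S = {x. \<forall>s\<in>S. g s x = 0}"

lemma subspace_orth_compl: "subspace (orth_compl S)"
  unfolding orth_compl_def subspace_def by (simp add: g_simps)

lemma orthogonal_set_coeff:
  assumes "finite V" "orthogonal_set V" "u \<in> V"
  shows "g u (\<Sum>v\<in>V. c v *\<^sub>R v) = c u * g u u"
proof -
  have "g u (\<Sum>v\<in>V. c v *\<^sub>R v) = (\<Sum>v\<in>V. if v = u then c u * g u u else 0)"
    unfolding g_sum_right using assms(2,3) unfolding orthogonal_set_def by (intro sum.cong) auto
  also have "\<dots> = c u * g u u" using assms(1,3) by simp
  finally show ?thesis .
qed

lemma orthogonal_set_quad:
  assumes "finite V" "orthogonal_set V"
  shows "g (\<Sum>v\<in>V. c v *\<^sub>R v) (\<Sum>v\<in>V. c v *\<^sub>R v) = (\<Sum>v\<in>V. (c v)\<^sup>2 * g v v)"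
  unfolding g_sum_left[of c V] using orthogonal_set_coeff[OF assms]
  by (intro sum.cong) (auto simp: power2_eq_square)

lemma orthogonal_set_independent:
  assumes "finite V" "orthogonal_set V" "\<forall>v\<in>V. g v v \<noteq> 0"
  shows "independent V"
proof (rule independent_if_scalars_zero[OF assms(1)])
  fix c x assume "(\<Sum>x\<in>V. c x *\<^sub>R x) = 0" and "x \<in> V"
  then show "c x = 0"
    using orthogonal_set_coeff[OF assms(1,2), of x c] assms(3) by (simp add: g_simps)
qed

text \<open>The sign \<open>\<sigma>\<close> covers the positive and the negative definite case at once.\<close>
lemma orthogonal_set_definite:
  assumes "finite V" "orthogonal_set V" "\<forall>v\<in>V. \<sigma> * g v v > 0" "x \<in> span V" "x \<noteq> 0"
  shows "\<sigma> * g x x > 0"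
proof -
  obtain c where x: "x = (\<Sum>v\<in>V. c v *\<^sub>R v)" using assms(1,4) by (auto simp: span_finite)
  define t where "t v = (c v)\<^sup>2 * (\<sigma> * g v v)" for v
  have t_nonneg: "0 \<le> t v" if "v \<in> V" for v
  proof -
    have "0 \<le> \<sigma> * g v v" using assms(3) that by (simp add: less_imp_le)
    then show ?thesis unfolding t_def by (metis mult_nonneg_nonneg zero_le_power2)
  qed
  have "\<exists>v\<in>V. c v \<noteq> 0"
  proof (rule ccontr)
    assume "\<not> ?thesis"
    then have "x = 0" unfolding x by simp
    then show False using assms(5) by simp
  qed
  then obtain v where v: "v \<in> V" "c v \<noteq> 0" by blast
  have "(c v)\<^sup>2 > 0" "\<sigma> * g v v > 0" using assms(3) v by auto
  then have "t v > 0" unfolding t_def by (rule mult_pos_pos)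
  then have "sum t V \<noteq> 0" using sum_nonneg_eq_0_iff[OF assms(1) t_nonneg] v(1) by force
  moreover have "\<sigma> * g x x = sum t V"
    unfolding x orthogonal_set_quad[OF assms(1,2)] t_def by (simp add: sum_distrib_left algebra_simps)
  moreover have "sum t V \<ge> 0" using t_nonneg by (simp add: sum_nonneg)
  ultimately show ?thesis by linarith
qed

lemma orthogonal_set_card_le_neg_index:
  assumes "finite V" "orthogonal_set V" "\<forall>v\<in>V. g v v < 0"
  shows "card V \<le> neg_index g"
proof -
  have "independent V" using orthogonal_set_independent assms by force
  then have "dim (span V) = card V" by (rule dim_span_eq_card_independent)
  moreover have "dim (span V) \<le> neg_index g"
    using orthogonal_set_definite[OF assms(1,2), of "-1"] assms(3)
    by (intro neg_index_ge) auto
  ultimately show ?thesis by simp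
qed

lemma span_insert_unit:
  assumes "subspace S" "e \<in> S" "g e e = 1" "S \<inter> orth_compl {e} \<subseteq> span E"
  shows "S \<subseteq> span (insert e E)"
proof
  fix x assume x: "x \<in> S"
  have "x - g e x *\<^sub>R e \<in> S \<inter> orth_compl {e}" unfolding orth_compl_def
    using x assms(1-3) by (simp add: subspace_diff subspace_scale g_simps)
  then have "x - g e x *\<^sub>R e \<in> span (insert e E)"
    using assms(4) span_mono[of E "insert e E"] by auto
  moreover have "g e x *\<^sub>R e \<in> span (insert e E)" by (intro span_mul span_base) simp
  ultimately have "(x - g e x *\<^sub>R e) + g e x *\<^sub>R e \<in> span (insert e E)" by (rule span_add)
  then show "x \<in> span (insert e E)" by simp
qed

lemma gram_schmidt:
  assumes "subspace S" "\<forall>x\<in>S. x \<noteq> 0 \<longrightarrow> g x x > 0"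
  obtains E where "finite E" "E \<subseteq> S" "S \<subseteq> span E" "\<forall>e\<in>E. g e e = 1" "orthogonal_set E"
  using assms
proof (induction "dim S" arbitrary: S thesis rule: less_induct)
  case less
  show ?case
  proof (cases "S \<subseteq> {0}")
    case True
    then show ?thesis by (intro less.prems(1)[of "{}"]) (auto simp: orthogonal_set_def)
  next
    case False
    then obtain s where s: "s \<in> S" "s \<noteq> 0" by auto
    have gs: "g s s > 0" using less.prems s by auto
    define e where "e = (1 / sqrt (g s s)) *\<^sub>R s"
    have ee: "g e e = 1" using gs by (simp add: e_def g_simps power2_eq_square[symmetric])
    have eS: "e \<in> S" using s less.prems(2) by (simp add: e_def subspace_scale)
    define S' where "S' = S \<inter> orth_compl {e}"
    have sub': "subspace S'"
      unfolding S'_def by (rule subspace_inter[OF less.prems(2) subspace_orth_compl])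
    have "e \<notin> S'" using ee unfolding S'_def orth_compl_def by simp
    then have "S' \<subset> S" using eS unfolding S'_def by blast
    then have "dim S' < dim S" using dim_psubset[of S' S] sub' less.prems(2)
      by (simp add: span_eq_iff[THEN iffD2])
    moreover have "\<forall>x\<in>S'. x \<noteq> 0 \<longrightarrow> g x x > 0" using less.prems(3) unfolding S'_def by auto
    ultimately obtain E' where E': "finite E'" "E' \<subseteq> S'" "S' \<subseteq> span E'" "\<forall>e\<in>E'. g e e = 1"
        "orthogonal_set E'"
      using less.hyps[OF _ _ sub'] by blast
    show ?thesis
    proof (rule less.prems(1)[of "insert e E'"])
      show "finite (insert e E')" using E' by simp
      show "insert e E' \<subseteq> S" using E'(2) eS unfolding S'_def by auto
      show "S \<subseteq> span (insert e E')"
        using span_insert_unit[OF less.prems(2) eS ee E'(3)[unfolded S'_def]] .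
      show "\<forall>e\<in>insert e E'. g e e = 1" using ee E'(4) by simp
      show "orthogonal_set (insert e E')"
        using E'(2,5) unfolding orthogonal_set_def S'_def orth_compl_def by (auto simp: g_sym)
    qed
  qed
qed

lemma psd_isotropic_orthogonal:
  assumes "subspace W" "\<forall>x\<in>W. g x x \<ge> 0" "x \<in> W" "g x x = 0" "y \<in> W"
  shows "g x y = 0"
proof (rule ccontr)
  assume a: "g x y \<noteq> 0"
  define d where "d = \<bar>g y y\<bar> + 1"
  define t where "t = g x y / d"
  have "g (x - t *\<^sub>R y) (x - t *\<^sub>R y) = t * (t * g y y - 2 * g x y)"
    using assms(4) by (simp add: g_simps g_sym[of y x] power2_eq_square algebra_simps)
  also have "\<dots> = ((g x y)\<^sup>2 / d\<^sup>2) * (g y y - 2 * d)"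
    by (simp add: t_def d_def field_simps power2_eq_square)
  also have "\<dots> < 0"
    using a by (intro mult_pos_neg) (auto simp: d_def abs_if)
  moreover have "x - t *\<^sub>R y \<in> W" using assms(1,3,5) by (simp add: subspace_diff subspace_scale)
  ultimately show False using assms(2) by fastforce
qed


lemma orthogonal_basis_pseudo_inner:
  assumes fin: "finite V" and card: "card V = DIM('v)" and orth: "orthogonal_set V"
    and nonisotropic: "\<forall>v\<in>V. g v v \<noteq> 0"
  shows "pseudo_inner g"
proof -
  have "independent V" by (rule orthogonal_set_independent[OF fin orth nonisotropic])
  then have span: "UNIV \<subseteq> span V" using card_eq_dim[of V UNIV] fin card by simp
  have "x = 0" if "\<forall>y. g x y = 0" for x
  proof -
    obtain c where x: "x = (\<Sum>u\<in>V. c u *\<^sub>R u)" using span fin by (auto simp: span_finite)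
    have "c u = 0" if u: "u \<in> V" for u
    proof -
      have "g u x = c u * g u u" unfolding x by (rule orthogonal_set_coeff[OF fin orth u])
      then show "c u = 0" using \<open>\<forall>y. g x y = 0\<close> u nonisotropic by (simp add: g_sym[of u x])
    qed
    then show ?thesis unfolding x by simp
  qed
  then show ?thesis unfolding pseudo_inner_def using bilinear_g g_sym by blast
qed

text \<open>A negative definite subspace meets the span of the positive vectors of the basis
  trivially, so its dimension is at most the number of negative ones.\<close>
lemma orthogonal_basis_neg_index:
  assumes fin: "finite V" and card: "card V = DIM('v)" and orth: "orthogonal_set V"
    and nonisotropic: "\<forall>v\<in>V. g v v \<noteq> 0"
  shows "neg_index g = card {v\<in>V. g v v < 0}"
proof -
  define N where "N = {v\<in>V. g v v < 0}"
  define P where "P = {v\<in>V. g v v > 0}"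
  have "g v v < 0 \<or> g v v > 0" if "v \<in> V" for v
    using nonisotropic that by (auto simp: linorder_neq_iff)
  then have NP: "N \<union> P = V" "N \<inter> P = {}" unfolding N_def P_def by auto
  have fin_NP: "finite N" "finite P" using fin unfolding N_def P_def by auto
  have orth_NP: "orthogonal_set N" "orthogonal_set P"
    using orth unfolding orthogonal_set_def N_def P_def by auto
  have "independent V" by (rule orthogonal_set_independent[OF fin orth nonisotropic])
  then have dim_P: "dim (span P) = card P"
    using dim_span_eq_card_independent independent_mono NP by blast
  have "card N \<le> neg_index g"
    using orthogonal_set_card_le_neg_index[OF fin_NP(1) orth_NP(1)] by (simp add: N_def)
  moreover have "neg_index g \<le> card N"
  proof (rule neg_index_le)
    fix S assume S: "subspace S" "\<forall>x\<in>S. x \<noteq> 0 \<longrightarrow> g x x < 0"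
    have "x = 0" if "x \<in> S" "x \<in> span P" for x
    proof (rule ccontr)
      assume "x \<noteq> 0"
      then have "g x x < 0" using S(2) that(1) by blast
      moreover have "1 * g x x > 0"
        using orthogonal_set_definite[OF fin_NP(2) orth_NP(2), of 1 x] that(2) \<open>x \<noteq> 0\<close>
        by (simp add: P_def)
      ultimately show False by simp
    qed
    then have "dim (S \<inter> span P) = 0" by (auto simp: dim_eq_0)
    moreover have "dim {x + y |x y. x \<in> S \<and> y \<in> span P} + dim (S \<inter> span P) = dim S + dim (span P)"
      by (rule dim_sums_Int[OF S(1) subspace_span])
    moreover have "dim {x + y |x y. x \<in> S \<and> y \<in> span P} \<le> DIM('v)" by (rule dim_subset_UNIV)
    moreover have "card N + card P = DIM('v)"
      using card_Un_disjoint[OF fin_NP NP(2)] NP(1) card by simp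
    ultimately show "dim S \<le> card N" using dim_P by linarith
  qed
  ultimately show ?thesis unfolding N_def by simp
qed

end

locale biorthogonal_system =
  fixes I :: "'i set" and v :: "'i \<Rightarrow> 'v::euclidean_space" and \<kappa> :: "'i \<Rightarrow> 'v \<Rightarrow> real"
  assumes finite_I: "finite I" and linear_\<kappa>: "\<And>p. p \<in> I \<Longrightarrow> linear (\<kappa> p)"
    and \<kappa>_v: "\<And>p q. p \<in> I \<Longrightarrow> q \<in> I \<Longrightarrow> \<kappa> p (v q) = (if p = q then 1 else 0)"
begin

lemma \<kappa>_sum:
  assumes "p \<in> I"
  shows "\<kappa> p (\<Sum>q\<in>I. c q *\<^sub>R v q) = c p"
proof -
  have "\<kappa> p (\<Sum>q\<in>I. c q *\<^sub>R v q) = (\<Sum>q\<in>I. if q = p then c p else 0)"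
    using assms by (auto simp: linear_sum[OF linear_\<kappa>] linear_scale[OF linear_\<kappa>] \<kappa>_v
        intro!: sum.cong)
  also have "\<dots> = c p" using finite_I assms by simp
  finally show ?thesis .
qed

lemma inj_on_v: "inj_on v I"
proof (rule inj_onI)
  fix p q assume pq: "p \<in> I" "q \<in> I" "v p = v q"
  then have "\<kappa> p (v q) = 1" using \<kappa>_v[of p p] by simp
  then show "p = q" using \<kappa>_v[OF pq(1,2)] by (simp split: if_splits)
qed

lemma independent_v: "independent (v ` I)"
proof (rule independent_if_scalars_zero)
  show "finite (v ` I)" using finite_I by simp
  fix c x assume sum0: "(\<Sum>y\<in>v ` I. c y *\<^sub>R y) = 0" and "x \<in> v ` I"
  then obtain p where p: "p \<in> I" "x = v p" by auto
  have "(\<Sum>q\<in>I. c (v q) *\<^sub>R v q) = 0"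
    using sum0 by (simp add: sum.reindex[OF inj_on_v])
  then show "c x = 0"
    using \<kappa>_sum[OF p(1), of "c \<circ> v"] linear_0[OF linear_\<kappa>[OF p(1)]] p(2) by simp
qed

lemma expansion:
  assumes "card I = DIM('v)"
  shows "y = (\<Sum>p\<in>I. \<kappa> p y *\<^sub>R v p)"
proof -
  have "UNIV \<subseteq> span (v ` I)"
    using card_eq_dim[of "v ` I" UNIV] independent_v finite_I assms card_image[OF inj_on_v] by simp
  then obtain c where "y = (\<Sum>x\<in>v ` I. c x *\<^sub>R x)"
    using finite_I by (auto simp: span_finite)
  then have y: "y = (\<Sum>q\<in>I. c (v q) *\<^sub>R v q)" by (simp add: sum.reindex[OF inj_on_v])
  have "\<kappa> p y = c (v p)" if "p \<in> I" for p
    using \<kappa>_sum[OF that, of "c \<circ> v"] y by simp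
  then have "(\<Sum>p\<in>I. \<kappa> p y *\<^sub>R v p) = (\<Sum>q\<in>I. c (v q) *\<^sub>R v q)"
    by (intro sum.cong) auto
  then show ?thesis using y by simp
qed


lemma trace_map_eq:
  assumes "card I = DIM('v)" and "linear f"
  shows "trace_map f = (\<Sum>p\<in>I. \<kappa> p (f (v p)))"
proof -
  have "f = (\<lambda>x. \<Sum>p\<in>I. \<kappa> p x *\<^sub>R f (v p))"
  proof
    fix x
    have "f x = f (\<Sum>p\<in>I. \<kappa> p x *\<^sub>R v p)" by (rule arg_cong[OF expansion[OF assms(1)]])
    then show "f x = (\<Sum>p\<in>I. \<kappa> p x *\<^sub>R f (v p))"
      by (simp add: linear_sum[OF assms(2)] linear_scale[OF assms(2)])
  qed
  then have "trace_map f = trace_map (\<lambda>x. \<Sum>p\<in>I. \<kappa> p x *\<^sub>R f (v p))" by (rule arg_cong)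
  also have "\<dots> = (\<Sum>p\<in>I. \<kappa> p (f (v p)))"
    unfolding trace_map_sum by (rule sum.cong) (auto intro: trace_map_rank_one linear_\<kappa>)
  finally show ?thesis .
qed
end

section \<open>Levi-Civita product and Ricci curvature\<close>

locale heisenberg_metric = heisenberg_centre B z for B :: "'v::euclidean_space \<Rightarrow> 'v \<Rightarrow> 'v" and z +
  fixes g :: "'v \<Rightarrow> 'v \<Rightarrow> real" and J :: "'v \<Rightarrow> 'v"
  assumes pseudo_inner_g: "pseudo_inner g" and linear_J: "linear J"
    and g_J: "\<And>x y. g (J x) y = \<omega> x y"
begin

sublocale sym_form g
  using pseudo_inner_g unfolding pseudo_inner_def by unfold_locales auto

lemma g_nondegenerate: "(\<And>y. g x y = 0) \<Longrightarrow> x = 0"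
  using pseudo_inner_g unfolding pseudo_inner_def by auto

lemmas J_simps = linear_add[OF linear_J] linear_diff[OF linear_J] linear_scale[OF linear_J]
  linear_0[OF linear_J] linear_neg[OF linear_J]

lemma J_z [simp]: "J z = 0"
  by (rule g_nondegenerate) (simp add: g_J)

lemma g_z_J [simp]: "g z (J x) = 0"
  by (simp add: g_sym[of z] g_J)

definition lc :: "'v \<Rightarrow> 'v \<Rightarrow> 'v" where
  "lc x y = (1/2) *\<^sub>R (\<omega> x y *\<^sub>R z - g z y *\<^sub>R J x - g z x *\<^sub>R J y)"

lemma koszul_lc: "2 * g (lc x y) v = g (B x y) v + g (B v x) y + g (B v y) x"
  by (simp add: lc_def g_simps g_J B_eq_form[of x y] B_eq_form[of v x] B_eq_form[of v y]
      g_sym[of z] \<omega>_skew[of v x] \<omega>_skew[of v y] algebra_simps)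

lemma levi_civita_eq: "levi_civita B g x y = lc x y"
  unfolding levi_civita_def
proof (rule the_equality)
  show "\<forall>v. 2 * g (lc x y) v = g (B x y) v + g (B v x) y + g (B v y) x"
    using koszul_lc by blast
  fix a assume a: "\<forall>v. 2 * g a v = g (B x y) v + g (B v x) y + g (B v y) x"
  have "g (a - lc x y) v = 0" for v
  proof -
    have "2 * g a v = 2 * g (lc x y) v" using a koszul_lc[of x y v] by simp
    then show ?thesis by (simp add: g_simps)
  qed
  then show "a = lc x y" using g_nondegenerate by force
qed

lemma linear_lc_left: "linear (\<lambda>x. lc x y)"
  by (rule linearI) (simp_all add: lc_def \<omega>_simps g_simps J_simps algebra_simps)

lemma lc_z: "lc z v = (- (g z z / 2)) *\<^sub>R J v"
  by (simp add: lc_def)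

lemma trace_lc_bracket: "trace_map (\<lambda>x. lc (B u x) v) = - (g z z / 2) * \<omega> u (J v)"
proof -
  have "(\<lambda>x. lc (B u x) v) = (\<lambda>x. \<omega> u x *\<^sub>R ((- (g z z / 2)) *\<^sub>R J v))"
    by (rule ext) (simp add: B_eq_form[of u] linear_scale[OF linear_lc_left] lc_z)
  then have "trace_map (\<lambda>x. lc (B u x) v) = \<omega> u ((- (g z z / 2)) *\<^sub>R J v)"
    by (simp only: trace_map_rank_one[OF linear_\<omega>_right])
  then show ?thesis by (simp add: \<omega>_simps)
qed

lemma trace_lc_left: "trace_map (\<lambda>x. lc x a) = - (1/2) * g z a * trace_map J"
proof -
  have "(\<lambda>x. lc x a) = (\<lambda>x. (1/2) *\<^sub>R (\<omega> x a *\<^sub>R z) - (1/2 * g z a) *\<^sub>R J x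
      - (1/2) *\<^sub>R (g z x *\<^sub>R J a))"
    by (rule ext) (simp add: lc_def algebra_simps)
  then have "trace_map (\<lambda>x. lc x a)
      = (1/2) * \<omega> z a - (1/2 * g z a) * trace_map J - (1/2) * g z (J a)"
    by (simp only: trace_map_diff trace_map_scale trace_map_rank_one[OF linear_\<omega>_left]
        trace_map_rank_one[OF linear_g_right])
  then show ?thesis by simp
qed

lemma trace_J_lc: "trace_map (\<lambda>x. J (lc x v)) = - (1/2) * g z v * trace_map (\<lambda>x. J (J x))"
proof -
  have "(\<lambda>x. J (lc x v)) = (\<lambda>x. (- (1/2) * g z v) *\<^sub>R J (J x) - (1/2) *\<^sub>R (g z x *\<^sub>R J (J v)))"
    by (rule ext) (simp add: lc_def J_simps algebra_simps)
  then show ?thesis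
    by (simp only: trace_map_diff trace_map_scale trace_map_rank_one[OF linear_g_right]) simp
qed

lemma trace_lc_lc: "trace_map (\<lambda>x. lc u (lc x v)) = (1/2) * (- (g z z / 2) * \<omega> u (J v)
    - (1/2) * \<omega> (J u) v * g z z + (1/2) * g z u * g z v * trace_map (\<lambda>x. J (J x)))"
proof -
  have lin_\<omega>: "linear (\<lambda>x. \<omega> u (lc x v))"
    using linear_compose[OF linear_lc_left linear_\<omega>_right] by (simp add: o_def)
  have lin_g: "linear (\<lambda>x. g z (lc x v))"
    using linear_compose[OF linear_lc_left linear_g_right] by (simp add: o_def)
  have "(\<lambda>x. lc u (lc x v)) = (\<lambda>x. (1/2) *\<^sub>R (\<omega> u (lc x v) *\<^sub>R z)
      - (1/2) *\<^sub>R (g z (lc x v) *\<^sub>R J u) - (1/2 * g z u) *\<^sub>R J (lc x v))"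
    by (rule ext) (simp add: lc_def[of u] algebra_simps)
  then have "trace_map (\<lambda>x. lc u (lc x v)) = (1/2) * \<omega> u (lc z v) - (1/2) * g z (lc (J u) v)
      - (1/2 * g z u) * trace_map (\<lambda>x. J (lc x v))"
    by (simp only: trace_map_diff trace_map_scale trace_map_rank_one[OF lin_\<omega>]
        trace_map_rank_one[OF lin_g])
  also have "\<dots> = (1/2) * (- (g z z / 2) * \<omega> u (J v)) - (1/2) * ((1/2) * \<omega> (J u) v * g z z)
      - (1/2 * g z u) * (- (1/2) * g z v * trace_map (\<lambda>x. J (J x)))"
    unfolding trace_J_lc by (simp add: lc_z \<omega>_simps lc_def g_simps)
  finally show ?thesis by (simp add: algebra_simps)
qed

lemma ricci_eq:
  "ricci B g u v = (g z z / 4) * (\<omega> (J u) v - \<omega> u (J v) - \<omega> u v * trace_map J)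
     - (1/4) * g z u * g z v * trace_map (\<lambda>x. J (J x))"
proof -
  have "g z (lc u v) = (1/2) * \<omega> u v * g z z"
    by (simp add: lc_def g_simps)
  moreover have "ricci B g u v = trace_map (\<lambda>x. lc (B u x) v) - trace_map (\<lambda>x. lc u (lc x v))
      + trace_map (\<lambda>x. lc x (lc u v))"
    by (simp add: ricci_def curvature_def levi_civita_eq trace_map_add trace_map_diff)
  ultimately show ?thesis
    unfolding trace_lc_bracket trace_lc_left trace_lc_lc by (simp add: algebra_simps)
qed

text \<open>If the centre is not null, Ricci flatness forces \<open>J\<close> to be totally isotropic on the
  hyperplane \<open>z\<^sup>\<perp>\<close>, hence everywhere, and then the bracket vanishes.\<close>
lemma ricci_flat_imp_center_null:
  assumes flat: "ricci_flat B g"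
  shows "g z z = 0"
proof (rule ccontr)
  assume c: "g z z \<noteq> 0"
  have isotropic_perp: "g (J x) (J x) = 0" if "g z x = 0" for x
  proof -
    have "0 = ricci B g x x" using flat unfolding ricci_flat_def by simp
    also have "\<dots> = (g z z / 4) * (\<omega> (J x) x - \<omega> x (J x))"
      using ricci_eq[of x x] that by simp
    also have "\<dots> = - (g z z / 2) * g (J x) (J x)"
      using \<omega>_skew[of "J x" x] by (simp add: g_J)
    finally show ?thesis using c by simp
  qed
  have isotropic: "g (J x) (J x) = 0" for x
  proof -
    have "g (J (x - (g z x / g z z) *\<^sub>R z)) (J (x - (g z x / g z z) *\<^sub>R z)) = 0"
      by (rule isotropic_perp) (use c in \<open>simp add: g_simps\<close>)
    then show ?thesis by (simp add: J_simps)
  qed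
  have "g (J x) (J y) = 0" for x y
  proof -
    have "g (J (x+y)) (J (x+y)) = g (J x) (J x) + 2 * g (J x) (J y) + g (J y) (J y)"
      by (simp add: J_simps g_simps g_sym[of "J y" "J x"])
    then show ?thesis using isotropic by simp
  qed
  then have \<omega>_J: "\<omega> x (J y) = 0" for x y by (simp add: g_J)
  have J_rad: "\<omega> (J y) x = 0" for x y using \<omega>_J[of x y] \<omega>_skew[of "J y" x] by simp
  have "J y = 0" for y
  proof -
    obtain t where t: "J y = t *\<^sub>R z" using \<omega>_radical J_rad by blast
    have "t * g z z = g z (J y)" by (simp add: t g_simps)
    then have "t = 0" using c by simp
    then show ?thesis using t by simp
  qed
  then have "B x y = 0" for x y using B_eq_form[of x y] g_J[of x y] by (simp add: g_simps)
  then show False using B_nontrivial by blast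
qed

lemma ricci_flat_iff: "ricci_flat B g \<longleftrightarrow> g z z = 0 \<and> trace_map (\<lambda>x. J (J x)) = 0"
proof
  assume flat: "ricci_flat B g"
  then have null: "g z z = 0" by (rule ricci_flat_imp_center_null)
  obtain u where u: "g z u \<noteq> 0" using g_nondegenerate z_nonzero by blast
  have "ricci B g u u = - (1/4) * (g z u)\<^sup>2 * trace_map (\<lambda>x. J (J x))"
    using ricci_eq[of u u] null by (simp add: power2_eq_square)
  then show "g z z = 0 \<and> trace_map (\<lambda>x. J (J x)) = 0"
    using flat null u unfolding ricci_flat_def by simp
next
  assume "g z z = 0 \<and> trace_map (\<lambda>x. J (J x)) = 0"
  then show "ricci_flat B g" unfolding ricci_flat_def by (simp add: ricci_eq)
qed

end

section \<open>Ricci flat Lorentzian metrics\<close>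

context heisenberg_metric
begin

lemma null_vector_partner:
  assumes null: "g z z = 0"
  obtains u where "g z u = 1" "g u u = 0"
proof -
  obtain y where y: "g z y \<noteq> 0" using g_nondegenerate z_nonzero by blast
  define u0 where "u0 = (1 / g z y) *\<^sub>R y"
  have z_u0: "g z u0 = 1" using y by (simp add: u0_def g_simps)
  show thesis
  proof (rule that)
    show "g z (u0 - (g u0 u0 / 2) *\<^sub>R z) = 1" using z_u0 null by (simp add: g_simps)
    show "g (u0 - (g u0 u0 / 2) *\<^sub>R z) (u0 - (g u0 u0 / 2) *\<^sub>R z) = 0"
      using z_u0 null by (simp add: g_simps g_sym[of u0 z])
  qed
qed

context
  fixes u
  assumes z_null: "g z z = 0" and z_u: "g z u = 1" and u_null: "g u u = 0"
begin

lemma u_z: "g u z = 1"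
  using z_u by (simp add: g_sym[of u z])

lemma hyperbolic_decomposition: "y - g u y *\<^sub>R z - g z y *\<^sub>R u \<in> orth_compl {z, u}"
  unfolding orth_compl_def using z_null z_u u_z u_null by (simp add: g_simps)

lemma orth_compl_pos_semidef:
  assumes index: "neg_index g = 1" and x: "x \<in> orth_compl {z, u}"
  shows "g x x \<ge> 0"
proof (rule ccontr)
  assume "\<not> g x x \<ge> 0"
  then have neg: "g x x < 0" by simp
  define t where "t = z - (1/2) *\<^sub>R u"
  have t_t: "g t t = -1" using z_null z_u u_z u_null by (simp add: t_def g_simps)
  have t_x: "g t x = 0" using x by (simp add: t_def orth_compl_def g_simps)
  then have "t \<noteq> x" using t_t by auto
  moreover have "card {t, x} \<le> neg_index g"
    using t_t t_x neg
    by (intro orthogonal_set_card_le_neg_index) (auto simp: orthogonal_set_def g_sym[of x t])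
  ultimately show False using index by simp
qed

lemma orth_compl_pos_def:
  assumes index: "neg_index g = 1" and x: "x \<in> orth_compl {z, u}" and "x \<noteq> 0"
  shows "g x x > 0"
proof (rule ccontr)
  assume "\<not> g x x > 0"
  then have isotropic: "g x x = 0" using orth_compl_pos_semidef[OF index x] by simp
  have x_z: "g x z = 0" and x_u: "g x u = 0"
    using x by (auto simp: orth_compl_def g_sym[of x])
  have "g x y = 0" for y
  proof -
    have "g x (y - g u y *\<^sub>R z - g z y *\<^sub>R u) = 0"
      using orth_compl_pos_semidef[OF index]
      by (intro psd_isotropic_orthogonal[OF subspace_orth_compl _ x isotropic hyperbolic_decomposition])
        blast
    then show ?thesis using x_z x_u by (simp add: g_simps)
  qed
  then show False using g_nondegenerate \<open>x \<noteq> 0\<close> by blast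
qed

context
  fixes E
  assumes finite_E: "finite E" and E_sub: "E \<subseteq> orth_compl {z, u}"
    and E_span: "orth_compl {z, u} \<subseteq> span E" and E_norm: "\<forall>e\<in>E. g e e = 1"
    and E_orth: "orthogonal_set E"
begin

lemma orth_compl_expansion:
  assumes x: "x \<in> orth_compl {z, u}"
  shows "x = (\<Sum>e\<in>E. g e x *\<^sub>R e)"
proof -
  obtain c where c: "x = (\<Sum>e\<in>E. c e *\<^sub>R e)"
    using x E_span finite_E by (auto simp: span_finite)
  have "g e x = c e" if "e \<in> E" for e
    using orthogonal_set_coeff[OF finite_E E_orth that, of c] E_norm that c by simp
  then show ?thesis using c by (auto intro: sum.cong)
qed

lemma hyperbolic_expansion: "y = g u y *\<^sub>R z + g z y *\<^sub>R u + (\<Sum>e\<in>E. g e y *\<^sub>R e)"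
proof -
  define w where "w = y - g u y *\<^sub>R z - g z y *\<^sub>R u"
  have "w = (\<Sum>e\<in>E. g e w *\<^sub>R e)"
    unfolding w_def by (rule orth_compl_expansion[OF hyperbolic_decomposition])
  also have "\<dots> = (\<Sum>e\<in>E. g e y *\<^sub>R e)"
  proof (rule sum.cong)
    fix e assume "e \<in> E"
    then have "g e z = 0" "g e u = 0" using E_sub by (auto simp: orth_compl_def g_sym[of e])
    then show "g e w *\<^sub>R e = g e y *\<^sub>R e" by (simp add: w_def g_simps)
  qed simp
  finally show ?thesis by (simp add: w_def algebra_simps)
qed

lemma trace_J_sq_hyperbolic: "trace_map (\<lambda>x. J (J x)) = - (\<Sum>e\<in>E. \<Sum>e'\<in>E. (g e' (J e))\<^sup>2)"
proof -
  have "(\<lambda>x. J (J x)) = (\<lambda>x. g u x *\<^sub>R J (J z) + g z x *\<^sub>R J (J u) + (\<Sum>e\<in>E. g e x *\<^sub>R J (J e)))"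
  proof
    fix x
    have "J (J x) = J (J (g u x *\<^sub>R z + g z x *\<^sub>R u + (\<Sum>e\<in>E. g e x *\<^sub>R e)))"
      using hyperbolic_expansion[of x] by simp
    then show "J (J x) = g u x *\<^sub>R J (J z) + g z x *\<^sub>R J (J u) + (\<Sum>e\<in>E. g e x *\<^sub>R J (J e))"
      by (simp add: J_simps linear_sum[OF linear_J])
  qed
  then have "trace_map (\<lambda>x. J (J x)) = g u (J (J z)) + g z (J (J u)) + (\<Sum>e\<in>E. g e (J (J e)))"
    by (simp only: trace_map_add trace_map_sum trace_map_rank_one[OF linear_g_right])
  also have "\<dots> = (\<Sum>e\<in>E. g e (J (J e)))" by (simp add: J_simps g_simps)
  also have "\<dots> = (\<Sum>e\<in>E. - (\<Sum>e'\<in>E. (g e' (J e))\<^sup>2))"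
  proof (rule sum.cong)
    fix e assume "e \<in> E"
    have "g (J e) (J e) = g (J e) (g u (J e) *\<^sub>R z + g z (J e) *\<^sub>R u + (\<Sum>e'\<in>E. g e' (J e) *\<^sub>R e'))"
      using hyperbolic_expansion[of "J e"] by simp
    also have "\<dots> = (\<Sum>e'\<in>E. (g e' (J e))\<^sup>2)"
      by (simp add: g_simps g_sum_right g_sym[of "J e"] power2_eq_square)
    finally have "g (J e) (J e) = (\<Sum>e'\<in>E. (g e' (J e))\<^sup>2)" .
    moreover have "g e (J (J e)) = - g (J e) (J e)"
      using \<omega>_skew[of "J e" e] by (simp add: g_sym[of e] g_J)
    ultimately show "g e (J (J e)) = - (\<Sum>e'\<in>E. (g e' (J e))\<^sup>2)" by simp
  qed simp
  finally show ?thesis by (simp add: sum_negf)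
qed

lemma trace_J_sq_zero_imp_\<omega>_orth_compl:
  assumes trace0: "trace_map (\<lambda>x. J (J x)) = 0"
    and x: "x \<in> orth_compl {z, u}" and x': "x' \<in> orth_compl {z, u}"
  shows "\<omega> x x' = 0"
proof -
  have sq_nonneg: "0 \<le> (\<Sum>e'\<in>E. (g e' (J e))\<^sup>2)" for e by (rule sum_nonneg) simp
  have "(\<Sum>e\<in>E. \<Sum>e'\<in>E. (g e' (J e))\<^sup>2) = 0" using trace0 trace_J_sq_hyperbolic by simp
  then have row0: "(\<Sum>e'\<in>E. (g e' (J e))\<^sup>2) = 0" if "e \<in> E" for e
    using sum_nonneg_eq_0_iff[OF finite_E, of "\<lambda>e. \<Sum>e'\<in>E. (g e' (J e))\<^sup>2"] sq_nonneg that
    by simp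
  have \<omega>_E: "\<omega> e e' = 0" if "e \<in> E" "e' \<in> E" for e e'
  proof -
    have "(g e' (J e))\<^sup>2 = 0"
      using sum_nonneg_eq_0_iff[OF finite_E, of "\<lambda>e'. (g e' (J e))\<^sup>2"] row0[OF that(1)] that(2)
      by simp
    then have "g e' (J e) = 0" by simp
    then show ?thesis by (simp add: g_sym[of e'] g_J)
  qed
  have "x \<in> span E" "x' \<in> span E" using x x' E_span by auto
  have \<omega>_E_x': "\<omega> e x' = 0" if "e \<in> E" for e
    by (rule linear_eq_0_on_span[OF linear_\<omega>_right \<omega>_E[OF that] \<open>x' \<in> span E\<close>])
  show ?thesis
    by (rule linear_eq_0_on_span[OF linear_\<omega>_left \<omega>_E_x' \<open>x \<in> span E\<close>])
qed

lemma orth_compl_\<omega>_u_injective: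
  assumes trace0: "trace_map (\<lambda>x. J (J x)) = 0"
    and x: "x \<in> orth_compl {z, u}" and xu: "\<omega> x u = 0"
  shows "x = 0"
proof -
  have "\<omega> x y = 0" for y
  proof -
    have "\<omega> x (y - g u y *\<^sub>R z - g z y *\<^sub>R u) = 0"
      by (rule trace_J_sq_zero_imp_\<omega>_orth_compl[OF trace0 x hyperbolic_decomposition])
    then show ?thesis using xu by (simp add: \<omega>_simps)
  qed
  then obtain s where s: "x = s *\<^sub>R z" using \<omega>_radical by blast
  have "s = g u x" using u_z by (simp add: s g_simps)
  then show ?thesis using x s by (simp add: orth_compl_def)
qed

lemma card_E_le_1:
  assumes trace0: "trace_map (\<lambda>x. J (J x)) = 0"
  shows "card E \<le> 1"
proof (rule ccontr)
  assume "\<not> card E \<le> 1"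
  then obtain e1 e2 where e: "e1 \<in> E" "e2 \<in> E" "e1 \<noteq> e2"
    using card_le_Suc0_iff_eq[OF finite_E] by auto
  have W: "e1 \<in> orth_compl {z, u}" "e2 \<in> orth_compl {z, u}" using e E_sub by auto
  have n: "g e1 e1 = 1" "g e2 e2 = 1" using e E_norm by auto
  have o: "g e1 e2 = 0" "g e2 e1 = 0" using e E_orth unfolding orthogonal_set_def by auto
  define x where "x = \<omega> e1 u *\<^sub>R e2 - \<omega> e2 u *\<^sub>R e1"
  have "x \<in> orth_compl {z, u}"
    unfolding x_def using W subspace_orth_compl by (simp add: subspace_diff subspace_scale)
  moreover have "\<omega> x u = 0" by (simp add: x_def \<omega>_simps)
  ultimately have "x = 0" by (rule orth_compl_\<omega>_u_injective[OF trace0])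
  then have "g e2 x = 0" by (simp add: g_simps)
  then have "\<omega> e1 u = 0" using n o by (simp add: x_def g_simps)
  then have "e1 = 0" using orth_compl_\<omega>_u_injective[OF trace0 W(1)] by simp
  then show False using n by (simp add: g_simps)
qed

lemma DIM_le_card_E_2: "DIM('v) \<le> card E + 2"
proof -
  have spans: "UNIV \<subseteq> span (insert z (insert u E))"
  proof
    fix x :: 'v
    have "g u x *\<^sub>R z + g z x *\<^sub>R u + (\<Sum>e\<in>E. g e x *\<^sub>R e) \<in> span (insert z (insert u E))"
      by (intro span_add span_mul span_sum span_base) auto
    then show "x \<in> span (insert z (insert u E))" using hyperbolic_expansion[of x] by simp
  qed
  then have "DIM('v) \<le> card (insert z (insert u E))"
    using dim_le_card[OF spans] finite_E by simp
  also have "\<dots> \<le> card E + 2"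
    using finite_E by (simp add: card_insert_if)
  finally show ?thesis .
qed

end

end

lemma lorentzian_ricci_flat_DIM_le_3:
  assumes index: "neg_index g = 1" and flat: "ricci_flat B g"
  shows "DIM('v) \<le> 3"
proof -
  have null: "g z z = 0" and trace0: "trace_map (\<lambda>x. J (J x)) = 0"
    using flat ricci_flat_iff by auto
  obtain u where u: "g z u = 1" "g u u = 0" using null_vector_partner[OF null] by blast
  obtain E where E: "finite E" "E \<subseteq> orth_compl {z, u}" "orth_compl {z, u} \<subseteq> span E"
      "\<forall>e\<in>E. g e e = 1" "orthogonal_set E"
    using gram_schmidt[OF subspace_orth_compl] orth_compl_pos_def[OF null u index] by blast
  show ?thesis
    using DIM_le_card_E_2[OF null u E] card_E_le_1[OF null u E trace0] by simp
qed

end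

section \<open>Ricci flat metrics from orthonormal frames\<close>


locale signed_frame = biorthogonal_system I v \<kappa>
  for I :: "'i set" and v :: "'i \<Rightarrow> 'v::euclidean_space" and \<kappa> +
  fixes \<epsilon> :: "'i \<Rightarrow> real"
  assumes card_I: "card I = DIM('v)" and \<epsilon>_sign: "\<And>p. p \<in> I \<Longrightarrow> \<epsilon> p = 1 \<or> \<epsilon> p = -1"
begin

definition frame_form :: "'v \<Rightarrow> 'v \<Rightarrow> real" where
  "frame_form x y = (\<Sum>p\<in>I. \<epsilon> p * \<kappa> p x * \<kappa> p y)"

lemma bilinear_frame_form: "bilinear frame_form"
  unfolding bilinear_def frame_form_def
  by (auto intro!: linearI simp: linear_add[OF linear_\<kappa>] linear_scale[OF linear_\<kappa>]
      sum.distrib[symmetric] sum_distrib_left algebra_simps intro: sum.cong)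

lemma frame_form_sym: "frame_form x y = frame_form y x"
  unfolding frame_form_def by (simp add: algebra_simps)

sublocale frame: sym_form frame_form
  by (rule sym_form.intro[OF bilinear_frame_form frame_form_sym])

lemma \<epsilon>_sq: "p \<in> I \<Longrightarrow> \<epsilon> p * \<epsilon> p = 1"
  using \<epsilon>_sign[of p] by auto

lemma frame_form_v:
  assumes "p \<in> I" "q \<in> I"
  shows "frame_form (v p) (v q) = (if p = q then \<epsilon> p else 0)"
proof -
  have "frame_form (v p) (v q) = (\<Sum>r\<in>I. if r = p then (if p = q then \<epsilon> p else 0) else 0)"
    unfolding frame_form_def using assms by (intro sum.cong refl) (auto simp: \<kappa>_v)
  also have "\<dots> = (if p = q then \<epsilon> p else 0)" using finite_I assms(1) by simp
  finally show ?thesis .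
qed

lemma frame_form_signature:
  "pseudo_inner frame_form" "neg_index frame_form = card {p\<in>I. \<epsilon> p < 0}"
proof -
  have orth: "frame.orthogonal_set (v ` I)"
    unfolding frame.orthogonal_set_def using frame_form_v by auto
  have nonisotropic: "\<forall>x\<in>v ` I. frame_form x x \<noteq> 0" using frame_form_v \<epsilon>_sign by fastforce
  have card: "card (v ` I) = DIM('v)" using card_image[OF inj_on_v] card_I by simp
  show "pseudo_inner frame_form"
    using frame.orthogonal_basis_pseudo_inner[OF _ card orth nonisotropic] finite_I by simp
  have "{x\<in>v ` I. frame_form x x < 0} = v ` {p\<in>I. \<epsilon> p < 0}"
    using frame_form_v by auto
  moreover have "card (v ` {p\<in>I. \<epsilon> p < 0}) = card {p\<in>I. \<epsilon> p < 0}"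
    by (rule card_image[OF inj_on_subset[OF inj_on_v]]) auto
  ultimately show "neg_index frame_form = card {p\<in>I. \<epsilon> p < 0}"
    using frame.orthogonal_basis_neg_index[OF _ card orth nonisotropic] finite_I by simp
qed

end

locale heisenberg_frame = heisenberg_centre B z + signed_frame I v \<kappa> \<epsilon>
  for B :: "'v::euclidean_space \<Rightarrow> 'v \<Rightarrow> 'v" and z and I :: "'i set" and v :: "'i \<Rightarrow> 'v"
    and \<kappa> \<epsilon>
begin

definition frame_J :: "'v \<Rightarrow> 'v" where
  "frame_J x = (\<Sum>p\<in>I. (\<epsilon> p * \<omega> x (v p)) *\<^sub>R v p)"

lemma linear_frame_J: "linear frame_J"
  unfolding frame_J_def
  by (rule linearI) (simp_all add: \<omega>_simps algebra_simps sum.distrib scaleR_sum_right)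

lemma \<kappa>_frame_J: "p \<in> I \<Longrightarrow> \<kappa> p (frame_J x) = \<epsilon> p * \<omega> x (v p)"
  unfolding frame_J_def by (rule \<kappa>_sum)

lemma frame_form_J: "frame_form (frame_J x) y = \<omega> x y"
proof -
  have "frame_form (frame_J x) y = (\<Sum>p\<in>I. \<omega> x (v p) * \<kappa> p y)"
    unfolding frame_form_def
  proof (rule sum.cong)
    fix p assume p: "p \<in> I"
    have "\<epsilon> p * \<kappa> p (frame_J x) * \<kappa> p y = (\<epsilon> p * \<epsilon> p) * (\<omega> x (v p) * \<kappa> p y)"
      by (simp add: \<kappa>_frame_J[OF p] algebra_simps)
    then show "\<epsilon> p * \<kappa> p (frame_J x) * \<kappa> p y = \<omega> x (v p) * \<kappa> p y" by (simp add: \<epsilon>_sq[OF p])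
  qed simp
  also have "\<dots> = \<omega> x (\<Sum>p\<in>I. \<kappa> p y *\<^sub>R v p)"
    by (simp add: \<omega>_sum_right \<omega>_simps mult.commute)
  also have "\<dots> = \<omega> x y" by (rule arg_cong[OF expansion[OF card_I, symmetric]])
  finally show ?thesis .
qed

lemma trace_frame_J_sq:
  "trace_map (\<lambda>x. frame_J (frame_J x)) = - (\<Sum>p\<in>I. \<Sum>q\<in>I. \<epsilon> p * \<epsilon> q * (\<omega> (v p) (v q))\<^sup>2)"
proof -
  have "trace_map (\<lambda>x. frame_J (frame_J x)) = (\<Sum>p\<in>I. \<epsilon> p * \<omega> (frame_J (v p)) (v p))"
    using trace_map_eq[OF card_I linear_compose[OF linear_frame_J linear_frame_J]]
    by (simp add: o_def \<kappa>_frame_J)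
  also have "\<dots> = (\<Sum>p\<in>I. - (\<Sum>q\<in>I. \<epsilon> p * \<epsilon> q * (\<omega> (v p) (v q))\<^sup>2))"
  proof (rule sum.cong)
    fix p
    have "\<omega> (frame_J (v p)) (v p) = (\<Sum>q\<in>I. \<epsilon> q * \<omega> (v p) (v q) * \<omega> (v q) (v p))"
      unfolding frame_J_def by (simp add: \<omega>_sum_left \<omega>_simps)
    also have "\<dots> = - (\<Sum>q\<in>I. \<epsilon> q * (\<omega> (v p) (v q))\<^sup>2)"
      by (simp add: \<omega>_skew[of "v _" "v p"] power2_eq_square sum_negf mult.assoc)
    finally show "\<epsilon> p * \<omega> (frame_J (v p)) (v p) = - (\<Sum>q\<in>I. \<epsilon> p * \<epsilon> q * (\<omega> (v p) (v q))\<^sup>2)"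
      by (simp add: sum_distrib_left mult.assoc)
  qed simp
  finally show ?thesis by (simp add: sum_negf)
qed

lemma frame_form_ricci_flat:
  assumes "frame_form z z = 0" "(\<Sum>p\<in>I. \<Sum>q\<in>I. \<epsilon> p * \<epsilon> q * (\<omega> (v p) (v q))\<^sup>2) = 0"
  shows "ricci_flat B frame_form"
proof -
  interpret heisenberg_metric B z frame_form frame_J
    unfolding heisenberg_metric_def heisenberg_metric_axioms_def
    using heisenberg_centre_axioms frame_form_signature(1) linear_frame_J frame_form_J by blast
  show ?thesis using ricci_flat_iff assms trace_frame_J_sq by simp
qed

end

section \<open>Darboux bases\<close>

context heisenberg_centre
begin

definition darboux :: "nat \<Rightarrow> (nat \<Rightarrow> 'v) \<Rightarrow> (nat \<Rightarrow> 'v) \<Rightarrow> bool" where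
  "darboux m e f \<longleftrightarrow> (\<forall>i<m. \<forall>j<m. \<omega> (e i) (f j) = (if i = j then 1 else 0) \<and>
     \<omega> (e i) (e j) = 0 \<and> \<omega> (f i) (f j) = 0)"

definition darboux_proj :: "nat \<Rightarrow> (nat \<Rightarrow> 'v) \<Rightarrow> (nat \<Rightarrow> 'v) \<Rightarrow> 'v \<Rightarrow> 'v" where
  "darboux_proj m e f x = x - (\<Sum>i<m. \<omega> x (f i) *\<^sub>R e i + \<omega> (e i) x *\<^sub>R f i)"

lemma linear_darboux_proj: "linear (darboux_proj m e f)"
  unfolding darboux_proj_def
  by (rule linearI) (simp_all add: \<omega>_simps algebra_simps sum.distrib scaleR_add_left scaleR_sum_right)

lemma darboux_proj_orth:
  assumes d: "darboux m e f" and j: "j < m"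
  shows "\<omega> (darboux_proj m e f x) (e j) = 0" "\<omega> (darboux_proj m e f x) (f j) = 0"
proof -
  have fe: "\<omega> (f i) (e j) = - (if i = j then 1 else 0)" if "i < m" for i
    using d that j \<omega>_skew[of "f i" "e j"] unfolding darboux_def by (auto split: if_splits)
  have "\<omega> (darboux_proj m e f x) (e j) = \<omega> x (e j)
      - (\<Sum>i<m. \<omega> x (f i) * \<omega> (e i) (e j) + \<omega> (e i) x * \<omega> (f i) (e j))"
    by (simp add: darboux_proj_def \<omega>_simps \<omega>_sum_left)
  also have "(\<Sum>i<m. \<omega> x (f i) * \<omega> (e i) (e j) + \<omega> (e i) x * \<omega> (f i) (e j))
      = (\<Sum>i<m. - (if i = j then \<omega> (e j) x else 0))"
    using d fe j unfolding darboux_def by (intro sum.cong) auto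
  also have "\<dots> = - \<omega> (e j) x" using j by (simp add: sum_negf)
  finally show "\<omega> (darboux_proj m e f x) (e j) = 0" using \<omega>_skew[of x "e j"] by simp
  have "\<omega> (darboux_proj m e f x) (f j) = \<omega> x (f j)
      - (\<Sum>i<m. \<omega> x (f i) * \<omega> (e i) (f j) + \<omega> (e i) x * \<omega> (f i) (f j))"
    by (simp add: darboux_proj_def \<omega>_simps \<omega>_sum_left)
  also have "(\<Sum>i<m. \<omega> x (f i) * \<omega> (e i) (f j) + \<omega> (e i) x * \<omega> (f i) (f j))
      = (\<Sum>i<m. (if i = j then \<omega> x (f j) else 0))"
    using d j unfolding darboux_def by (intro sum.cong) auto
  also have "\<dots> = \<omega> x (f j)" using j by simp
  finally show "\<omega> (darboux_proj m e f x) (f j) = 0" by simp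
qed

lemma darboux_proj_residual: "x - darboux_proj m e f x \<in> span (e ` {..<m} \<union> f ` {..<m})"
  unfolding darboux_proj_def by (simp, intro span_sum span_add span_mul span_base) auto

lemma darboux_proj_center:
  assumes d: "darboux m e f" and isotropic: "\<forall>x y. \<omega> (darboux_proj m e f x) (darboux_proj m e f y) = 0"
  shows "darboux_proj m e f x \<in> span {z}"
proof -
  have "\<omega> (darboux_proj m e f x) y = 0" for y
  proof -
    have "\<omega> (darboux_proj m e f x) (y - darboux_proj m e f y) = 0"
    proof (rule linear_eq_0_on_span[OF linear_\<omega>_right _ darboux_proj_residual])
      fix b assume "b \<in> e ` {..<m} \<union> f ` {..<m}"
      then show "\<omega> (darboux_proj m e f x) b = 0" using darboux_proj_orth[OF d] by auto
    qed
    then show ?thesis using isotropic by (simp add: \<omega>_simps)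
  qed
  then obtain t where "darboux_proj m e f x = t *\<^sub>R z" using \<omega>_radical by blast
  then show ?thesis by (metis span_base span_mul singletonI)
qed

lemma darboux_Suc:
  assumes d: "darboux m e f" and nonzero: "\<omega> (darboux_proj m e f x) (darboux_proj m e f y) \<noteq> 0"
  shows "\<exists>e' f'. darboux (Suc m) e' f'"
proof -
  define p where "p = darboux_proj m e f x"
  define q where "q = (1 / \<omega> p (darboux_proj m e f y)) *\<^sub>R darboux_proj m e f y"
  have pq: "\<omega> p q = 1" using nonzero by (simp add: q_def p_def \<omega>_simps)
  have qp: "\<omega> q p = -1" using pq \<omega>_skew[of q p] by simp
  have pe: "\<omega> p (e j) = 0" "\<omega> p (f j) = 0" "\<omega> q (e j) = 0" "\<omega> q (f j) = 0" if "j < m" for j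
    using darboux_proj_orth[OF d that] unfolding p_def q_def by (simp_all add: \<omega>_simps)
  have ep: "\<omega> (e j) p = 0" "\<omega> (f j) p = 0" "\<omega> (e j) q = 0" "\<omega> (f j) q = 0" if "j < m" for j
    using pe[OF that] \<omega>_skew[of _ p] \<omega>_skew[of _ q] by simp_all
  have "darboux (Suc m) (e(m := p)) (f(m := q))"
    unfolding darboux_def
  proof (intro allI impI)
    fix i j assume "i < Suc m" "j < Suc m"
    then show "\<omega> ((e(m := p)) i) ((f(m := q)) j) = (if i = j then 1 else 0) \<and>
        \<omega> ((e(m := p)) i) ((e(m := p)) j) = 0 \<and> \<omega> ((f(m := q)) i) ((f(m := q)) j) = 0"
      using d pq pe ep unfolding darboux_def
      by (cases "i = m"; cases "j = m") (auto simp: less_Suc_eq)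
  qed
  then show ?thesis by blast
qed

lemma darboux_extend:
  assumes d: "darboux m e f" and dim: "2 * m + 1 < DIM('v)"
  shows "\<exists>e' f'. darboux (Suc m) e' f'"
proof (rule ccontr)
  assume "\<not> ?thesis"
  then have isotropic: "\<forall>x y. \<omega> (darboux_proj m e f x) (darboux_proj m e f y) = 0"
    using darboux_Suc[OF d] by blast
  define T where "T = insert z (e ` {..<m} \<union> f ` {..<m})"
  have "UNIV \<subseteq> span T"
  proof
    fix x :: 'v
    have "darboux_proj m e f x \<in> span T"
      using darboux_proj_center[OF d isotropic] span_mono[of "{z}" T] unfolding T_def by auto
    moreover have "x - darboux_proj m e f x \<in> span T"
      using darboux_proj_residual span_mono[of _ T] unfolding T_def by (meson subset_insertI subsetD)
    ultimately have "darboux_proj m e f x + (x - darboux_proj m e f x) \<in> span T" by (rule span_add)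
    then show "x \<in> span T" by simp
  qed
  then have "DIM('v) \<le> card T" using dim_le_card[of UNIV T] unfolding T_def by simp
  also have "\<dots> \<le> Suc (card (e ` {..<m} \<union> f ` {..<m}))"
    unfolding T_def by (simp add: card_insert_if)
  also have "card (e ` {..<m} \<union> f ` {..<m}) \<le> card (e ` {..<m}) + card (f ` {..<m})"
    by (rule card_Un_le)
  also have "\<dots> \<le> m + m" using card_image_le[of "{..<m}" e] card_image_le[of "{..<m}" f] by simp
  finally show False using dim by simp
qed

lemma darboux_exists: "2 * m + 1 \<le> DIM('v) \<Longrightarrow> \<exists>e f. darboux m e f"
proof (induction m)
  case 0
  then show ?case by (auto simp: darboux_def)
next
  case (Suc m)
  then obtain e f where "darboux m e f" by auto
  then show ?case using darboux_extend Suc.prems by simp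
qed

definition darboux_coord :: "nat \<Rightarrow> (nat \<Rightarrow> 'v) \<Rightarrow> (nat \<Rightarrow> 'v) \<Rightarrow> 'v \<Rightarrow> real" where
  "darboux_coord m e f x = (darboux_proj m e f x \<bullet> z) / (z \<bullet> z)"

lemma linear_darboux_coord: "linear (darboux_coord m e f)"
  unfolding darboux_coord_def
  by (rule linearI) (simp_all add: linear_add[OF linear_darboux_proj]
      linear_scale[OF linear_darboux_proj] inner_add_left add_divide_distrib)

lemma darboux_coord_z [simp]: "darboux_coord m e f z = 1"
  using z_nonzero by (simp add: darboux_coord_def darboux_proj_def)

lemma darboux_coord_e:
  assumes d: "darboux m e f" and j: "j < m"
  shows "darboux_coord m e f (e j) = 0"
proof -
  have "(\<Sum>i<m. \<omega> (e j) (f i) *\<^sub>R e i + \<omega> (e i) (e j) *\<^sub>R f i) = (\<Sum>i<m. if i = j then e j else 0)"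
    using d j unfolding darboux_def by (intro sum.cong refl) auto
  then show ?thesis using j by (simp add: darboux_coord_def darboux_proj_def)
qed

lemma darboux_coord_f:
  assumes d: "darboux m e f" and j: "j < m"
  shows "darboux_coord m e f (f j) = 0"
proof -
  have "(\<Sum>i<m. \<omega> (f j) (f i) *\<^sub>R e i + \<omega> (e i) (f j) *\<^sub>R f i) = (\<Sum>i<m. if i = j then f j else 0)"
    using d j unfolding darboux_def by (intro sum.cong refl) auto
  then show ?thesis using j by (simp add: darboux_coord_def darboux_proj_def)
qed

end

datatype frame_index = Zplus | Zminus | Wnull | Ei nat | Fi nat

text \<open>Given a Darboux basis \<open>e\<^sub>i, f\<^sub>i\<close> (\<open>i < k\<close>) of \<open>\<omega>\<close>, the metric is the one for which
  \<open>z \<pm> e\<^sub>0/2, f\<^sub>0 + c f\<^sub>1, e\<^sub>i, f\<^sub>i\<close> (\<open>1 \<le> i < k\<close>) is orthonormal with norms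
  \<open>1, -1, -s\<^sub>1, s\<^sub>i, s\<^sub>i\<close>. Then \<open>z\<close> is null, and \<open>c\<^sup>2 = k - 1\<close> makes the pair
  \<open>(f\<^sub>0 + c f\<^sub>1, e\<^sub>1)\<close> cancel the contributions of the pairs \<open>(e\<^sub>i, f\<^sub>i)\<close> to \<open>tr J\<^sup>2\<close>.\<close>
locale ricci_flat_construction = heisenberg_centre B z for B :: "'v::euclidean_space \<Rightarrow> 'v \<Rightarrow> 'v" and z +
  fixes k :: nat and e f :: "nat \<Rightarrow> 'v" and s :: "nat \<Rightarrow> real" and c :: real
  assumes darboux_ef: "darboux k e f" and DIM_eq: "DIM('v) = 2 * k + 1" and k_pos: "1 \<le> k"
    and s_sign: "\<And>i. s i = 1 \<or> s i = -1" and c_sq: "c\<^sup>2 = real k - 1"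
begin

lemma \<omega>_e_f [simp]: "i < k \<Longrightarrow> j < k \<Longrightarrow> \<omega> (e i) (f j) = (if i = j then 1 else 0)"
  and \<omega>_e_e [simp]: "i < k \<Longrightarrow> j < k \<Longrightarrow> \<omega> (e i) (e j) = 0"
  and \<omega>_f_f [simp]: "i < k \<Longrightarrow> j < k \<Longrightarrow> \<omega> (f i) (f j) = 0"
  using darboux_ef unfolding darboux_def by auto

lemma \<omega>_f_e [simp]: "i < k \<Longrightarrow> j < k \<Longrightarrow> \<omega> (f i) (e j) = (if i = j then -1 else 0)"
  using \<omega>_skew[of "f i" "e j"] \<omega>_e_f[of j i] by auto

abbreviation \<alpha> :: "'v \<Rightarrow> real" where "\<alpha> \<equiv> darboux_coord k e f"

lemmas \<alpha>_simps = linear_add[OF linear_darboux_coord] linear_diff[OF linear_darboux_coord]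
  linear_scale[OF linear_darboux_coord] darboux_coord_e[OF darboux_ef] darboux_coord_f[OF darboux_ef]

lemma k_gt_0: "0 < k" using k_pos by simp

lemma s_sq [simp]: "s i * s i = 1" using s_sign[of i] by auto

lemma c_zero_or_k_gt_1: "c = 0 \<or> 1 < k"
  using c_sq k_pos by (cases "k = 1") auto

definition I :: "frame_index set" where
  "I = {Zplus, Zminus, Wnull} \<union> (Ei ` {1..<k} \<union> Fi ` {1..<k})"

definition v :: "frame_index \<Rightarrow> 'v" where
  "v p = (case p of Zplus \<Rightarrow> z + (1/2) *\<^sub>R e 0 | Zminus \<Rightarrow> z - (1/2) *\<^sub>R e 0
     | Wnull \<Rightarrow> f 0 + c *\<^sub>R f 1 | Ei i \<Rightarrow> e i | Fi i \<Rightarrow> f i)"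

definition \<kappa> :: "frame_index \<Rightarrow> 'v \<Rightarrow> real" where
  "\<kappa> p x = (case p of Zplus \<Rightarrow> \<alpha> x / 2 + \<omega> x (f 0) | Zminus \<Rightarrow> \<alpha> x / 2 - \<omega> x (f 0)
     | Wnull \<Rightarrow> \<omega> (e 0) x | Ei i \<Rightarrow> \<omega> x (f i)
     | Fi i \<Rightarrow> \<omega> (e i) x - (if i = 1 then c * \<omega> (e 0) x else 0))"

definition \<epsilon> :: "frame_index \<Rightarrow> real" where
  "\<epsilon> p = (case p of Zplus \<Rightarrow> 1 | Zminus \<Rightarrow> -1 | Wnull \<Rightarrow> - s 1 | Ei i \<Rightarrow> s i | Fi i \<Rightarrow> s i)"

lemma finite_I: "finite I"
  by (simp add: I_def)

lemma sum_I: "(\<Sum>p\<in>I. F p) = F Zplus + F Zminus + F Wnull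
    + (\<Sum>i\<in>{1..<k}. F (Ei i)) + (\<Sum>i\<in>{1..<k}. F (Fi i))"
proof -
  have "(\<Sum>p\<in>I. F p) = (\<Sum>p\<in>{Zplus, Zminus, Wnull}. F p) + (\<Sum>p\<in>Ei ` {1..<k} \<union> Fi ` {1..<k}. F p)"
    unfolding I_def by (rule sum.union_disjoint) auto
  also have "(\<Sum>p\<in>Ei ` {1..<k} \<union> Fi ` {1..<k}. F p)
      = (\<Sum>p\<in>Ei ` {1..<k}. F p) + (\<Sum>p\<in>Fi ` {1..<k}. F p)"
    by (rule sum.union_disjoint) auto
  also have "(\<Sum>p\<in>Ei ` {1..<k}. F p) = (\<Sum>i\<in>{1..<k}. F (Ei i))"
    by (rule sum.reindex_cong[of Ei]) (auto simp: inj_on_def)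
  also have "(\<Sum>p\<in>Fi ` {1..<k}. F p) = (\<Sum>i\<in>{1..<k}. F (Fi i))"
    by (rule sum.reindex_cong[of Fi]) (auto simp: inj_on_def)
  finally show ?thesis by (simp add: add.assoc)
qed

lemma card_I: "card I = DIM('v)"
proof -
  have "card I = card {Zplus, Zminus, Wnull} + card (Ei ` {1..<k} \<union> Fi ` {1..<k})"
    unfolding I_def by (rule card_Un_disjoint) auto
  also have "card (Ei ` {1..<k} \<union> Fi ` {1..<k}) = card (Ei ` {1..<k}) + card (Fi ` {1..<k})"
    by (rule card_Un_disjoint) auto
  also have "card (Ei ` {1..<k}) = k - 1" by (simp add: card_image inj_on_def)
  also have "card (Fi ` {1..<k}) = k - 1" by (simp add: card_image inj_on_def)
  finally show ?thesis using DIM_eq k_pos by simp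
qed

lemma index_cases:
  assumes "p \<in> I"
  obtains "p = Zplus" | "p = Zminus" | "p = Wnull"
    | i where "p = Ei i" "1 \<le> i" "i < k" | i where "p = Fi i" "1 \<le> i" "i < k"
  using assms unfolding I_def by auto

lemma linear_\<kappa>: "linear (\<kappa> p)"
  by (cases p) (auto simp: \<kappa>_def \<omega>_simps \<alpha>_simps algebra_simps intro!: linearI)

lemma \<kappa>_v:
  assumes p: "p \<in> I" and q: "q \<in> I"
  shows "\<kappa> p (v q) = (if p = q then 1 else 0)"
proof (cases "1 < k")
  case True
  then show ?thesis
    by (cases rule: index_cases[OF p]; cases rule: index_cases[OF q])
      (auto simp: \<kappa>_def v_def \<omega>_simps \<alpha>_simps k_gt_0)
next
  case False
  then have c0: "c *\<^sub>R x = 0" "c * t = 0" for x :: 'v and t :: real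
    using c_zero_or_k_gt_1 by simp_all
  from False show ?thesis
    by (cases rule: index_cases[OF p]; cases rule: index_cases[OF q])
      (auto simp: \<kappa>_def v_def \<omega>_simps \<alpha>_simps k_gt_0 c0)
qed

lemma \<epsilon>_sign: "\<epsilon> p = 1 \<or> \<epsilon> p = -1"
  using s_sign by (cases p) (auto simp: \<epsilon>_def)

sublocale heisenberg_frame B z I v \<kappa> \<epsilon>
  by (intro heisenberg_frame.intro heisenberg_centre_axioms signed_frame.intro
      biorthogonal_system.intro signed_frame_axioms.intro finite_I linear_\<kappa> \<kappa>_v card_I \<epsilon>_sign)

end

context ricci_flat_construction
begin

definition \<omega>_table :: "frame_index \<Rightarrow> frame_index \<Rightarrow> real" where
  "\<omega>_table p r = (case (p, r) of
       (Zplus, Wnull) \<Rightarrow> 1/2 | (Wnull, Zplus) \<Rightarrow> -1/2 | (Zminus, Wnull) \<Rightarrow> -1/2 | (Wnull, Zminus) \<Rightarrow> 1/2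
     | (Wnull, Ei j) \<Rightarrow> (if j = 1 then -c else 0) | (Ei i, Wnull) \<Rightarrow> (if i = 1 then c else 0)
     | (Ei i, Fi j) \<Rightarrow> (if i = j then 1 else 0) | (Fi i, Ei j) \<Rightarrow> (if i = j then -1 else 0)
     | _ \<Rightarrow> 0)"

lemma \<omega>_v:
  assumes p: "p \<in> I" and r: "r \<in> I"
  shows "\<omega> (v p) (v r) = \<omega>_table p r"
proof (cases "1 < k")
  case True
  then show ?thesis
    by (cases rule: index_cases[OF p]; cases rule: index_cases[OF r])
      (auto simp: v_def \<omega>_table_def \<omega>_simps k_gt_0)
next
  case False
  then have c0: "c *\<^sub>R x = 0" "c * t = 0" for x :: 'v and t :: real
    using c_zero_or_k_gt_1 by simp_all
  from False show ?thesis
    by (cases rule: index_cases[OF p]; cases rule: index_cases[OF r])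
      (auto simp: v_def \<omega>_table_def \<omega>_simps k_gt_0 c0)
qed

definition row :: "frame_index \<Rightarrow> real" where
  "row p = (\<Sum>r\<in>I. \<epsilon> r * (\<omega>_table p r)\<^sup>2)"

lemma sum_delta:
  assumes "i \<in> {1..<k}"
  shows "(\<Sum>j\<in>{1..<k}. (F :: nat \<Rightarrow> real) j * (if i = j then a else 0)) = F i * a"
proof -
  have "(\<Sum>j\<in>{1..<k}. F j * (if i = j then a else 0)) = (\<Sum>j\<in>{1..<k}. if i = j then F i * a else 0)"
    by (intro sum.cong refl) auto
  also have "\<dots> = F i * a" using assms by simp
  finally show ?thesis .
qed

lemma row_Zplus: "row Zplus = - s 1 / 4"
  unfolding row_def sum_I by (simp add: \<omega>_table_def \<epsilon>_def power2_eq_square)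

lemma row_Zminus: "row Zminus = - s 1 / 4"
  unfolding row_def sum_I by (simp add: \<omega>_table_def \<epsilon>_def power2_eq_square)

lemma row_Wnull: "row Wnull = (if 1 < k then s 1 * c\<^sup>2 else 0)"
proof -
  have "(\<Sum>i\<in>{1..<k}. \<epsilon> (Ei i) * (\<omega>_table Wnull (Ei i))\<^sup>2)
      = (\<Sum>i\<in>{1..<k}. s i * (if i = 1 then c\<^sup>2 else 0))"
    by (intro sum.cong refl) (simp add: \<omega>_table_def \<epsilon>_def if_distrib[of "\<lambda>x. x\<^sup>2"])
  also have "\<dots> = (\<Sum>i\<in>{1..<k}. if i = 1 then s 1 * c\<^sup>2 else 0)"
    by (intro sum.cong refl) auto
  also have "\<dots> = (if 1 < k then s 1 * c\<^sup>2 else 0)" by simp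
  finally show ?thesis unfolding row_def sum_I by (simp add: \<omega>_table_def \<epsilon>_def)
qed

lemma row_Ei: assumes i: "i \<in> {1..<k}" shows "row (Ei i) = s i - (if i = 1 then s 1 * c\<^sup>2 else 0)"
proof -
  have "(\<Sum>j\<in>{1..<k}. \<epsilon> (Fi j) * (\<omega>_table (Ei i) (Fi j))\<^sup>2)
      = (\<Sum>j\<in>{1..<k}. s j * (if i = j then 1 else 0))"
    by (intro sum.cong refl) (simp add: \<omega>_table_def \<epsilon>_def if_distrib[of "\<lambda>x. x\<^sup>2"])
  also have "\<dots> = s i" using sum_delta[OF i, of s 1] by simp
  finally have F_part: "(\<Sum>j\<in>{1..<k}. \<epsilon> (Fi j) * (\<omega>_table (Ei i) (Fi j))\<^sup>2) = s i" .
  have E_part: "(\<Sum>j\<in>{1..<k}. \<epsilon> (Ei j) * (\<omega>_table (Ei i) (Ei j))\<^sup>2) = 0"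
    by (simp add: \<omega>_table_def)
  show ?thesis unfolding row_def sum_I F_part E_part using i by (auto simp: \<omega>_table_def \<epsilon>_def)
qed

lemma row_Fi: assumes i: "i \<in> {1..<k}" shows "row (Fi i) = s i"
proof -
  have "(\<Sum>j\<in>{1..<k}. \<epsilon> (Ei j) * (\<omega>_table (Fi i) (Ei j))\<^sup>2)
      = (\<Sum>j\<in>{1..<k}. s j * (if i = j then 1 else 0))"
    by (intro sum.cong refl) (simp add: \<omega>_table_def \<epsilon>_def if_distrib[of "\<lambda>x. x\<^sup>2"])
  also have "\<dots> = s i" using sum_delta[OF i, of s 1] by simp
  finally have E_part: "(\<Sum>j\<in>{1..<k}. \<epsilon> (Ei j) * (\<omega>_table (Fi i) (Ei j))\<^sup>2) = s i" .
  have F_part: "(\<Sum>j\<in>{1..<k}. \<epsilon> (Fi j) * (\<omega>_table (Fi i) (Fi j))\<^sup>2) = 0"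
    by (simp add: \<omega>_table_def)
  show ?thesis unfolding row_def sum_I F_part E_part by (simp add: \<omega>_table_def \<epsilon>_def)
qed

lemma \<omega>_square_sum_zero: "(\<Sum>p\<in>I. \<Sum>r\<in>I. \<epsilon> p * \<epsilon> r * (\<omega> (v p) (v r))\<^sup>2) = 0"
proof -
  have "(\<Sum>p\<in>I. \<Sum>r\<in>I. \<epsilon> p * \<epsilon> r * (\<omega> (v p) (v r))\<^sup>2) = (\<Sum>p\<in>I. \<epsilon> p * row p)"
    unfolding row_def by (intro sum.cong refl) (simp add: \<omega>_v sum_distrib_left mult.assoc)
  also have "\<dots> = - s 1 * (if 1 < k then s 1 * c\<^sup>2 else 0)
      + (\<Sum>i\<in>{1..<k}. s i * (s i - (if i = 1 then s 1 * c\<^sup>2 else 0))) + (\<Sum>i\<in>{1..<k}. s i * s i)"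
  proof -
    have "(\<Sum>i\<in>{1..<k}. \<epsilon> (Ei i) * row (Ei i))
        = (\<Sum>i\<in>{1..<k}. s i * (s i - (if i = 1 then s 1 * c\<^sup>2 else 0)))"
      by (intro sum.cong refl) (simp add: row_Ei \<epsilon>_def)
    moreover have "(\<Sum>i\<in>{1..<k}. \<epsilon> (Fi i) * row (Fi i)) = (\<Sum>i\<in>{1..<k}. s i * s i)"
      by (intro sum.cong refl) (simp add: row_Fi \<epsilon>_def)
    ultimately show ?thesis
      unfolding sum_I row_Zplus row_Zminus row_Wnull by (simp add: \<epsilon>_def)
  qed
  also have "(\<Sum>i\<in>{1..<k}. s i * (s i - (if i = 1 then s 1 * c\<^sup>2 else 0)))
      = (\<Sum>i\<in>{1..<k}. 1 - (if i = 1 then c\<^sup>2 else 0))"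
    by (intro sum.cong refl) (auto simp: algebra_simps mult.assoc[symmetric])
  also have "\<dots> = real (k - 1) - (if 1 < k then c\<^sup>2 else 0)"
    by (simp add: sum_subtractf)
  also have "(\<Sum>i\<in>{1..<k}. s i * s i) = real (k - 1)" by simp
  finally have sum_eq: "(\<Sum>p\<in>I. \<Sum>r\<in>I. \<epsilon> p * \<epsilon> r * (\<omega> (v p) (v r))\<^sup>2)
      = - s 1 * (if 1 < k then s 1 * c\<^sup>2 else 0) + (real (k - 1) - (if 1 < k then c\<^sup>2 else 0))
        + real (k - 1)" .
  show ?thesis
  proof (cases "1 < k")
    case True
    then have "- s 1 * (if 1 < k then s 1 * c\<^sup>2 else 0) = - c\<^sup>2"
      using s_sq[of 1] by (simp add: algebra_simps)
    moreover have "real (k - 1) = c\<^sup>2" using c_sq True by (simp add: of_nat_diff)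
    ultimately show ?thesis using sum_eq True by simp
  next
    case False
    then have "k = 1" using k_pos by simp
    then show ?thesis using sum_eq by simp
  qed
qed

lemma z_null: "frame_form z z = 0"
  unfolding frame_form_def sum_I by (simp add: \<epsilon>_def \<kappa>_def cong: if_cong)

lemma card_negative:
  "card {p\<in>I. \<epsilon> p < 0} = 1 + (if s 1 = 1 then 1 else 0) + 2 * card {i\<in>{1..<k}. s i = -1}"
proof -
  have "card {p\<in>I. \<epsilon> p < 0} = (\<Sum>p\<in>I. if \<epsilon> p < 0 then 1 else (0::nat))"
    using sum.inter_filter[OF finite_I, of "\<lambda>_. 1::nat" "\<lambda>p. \<epsilon> p < 0"] by simp
  also have "\<dots> = 1 + (if s 1 = 1 then 1 else 0)
      + (\<Sum>i\<in>{1..<k}. if s i < 0 then 1 else 0) + (\<Sum>i\<in>{1..<k}. if s i < 0 then 1 else 0)"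
    unfolding sum_I using s_sign[of 1] by (auto simp: \<epsilon>_def)
  also have "(\<Sum>i\<in>{1..<k}. if s i < 0 then 1 else (0::nat)) = card {i\<in>{1..<k}. s i = -1}"
  proof -
    have "{i\<in>{1..<k}. s i = -1} = {i\<in>{1..<k}. s i < 0}" using s_sign by force
    then show ?thesis using sum.inter_filter[of "{1..<k}" "\<lambda>_. 1::nat" "\<lambda>i. s i < 0"] by simp
  qed
  finally show ?thesis by simp
qed

lemma ricci_flat_metric:
  "ricci_flat B frame_form" "pseudo_inner frame_form"
  "neg_index frame_form = 1 + (if s 1 = 1 then 1 else 0) + 2 * card {i\<in>{1..<k}. s i = -1}"
  using frame_form_ricci_flat[OF z_null \<omega>_square_sum_zero] frame_form_signature card_negative by simp_all

end

lemma heisenberg_lorentzian_ricci_flat_DIM_le_3: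
  fixes B :: "'v::euclidean_space \<Rightarrow> 'v \<Rightarrow> 'v"
  assumes gen: "heisenberg_centre B z" and lorentz: "lorentzian g" and flat: "ricci_flat B g"
  shows "DIM('v) \<le> 3"
proof -
  have g: "pseudo_inner g" "neg_index g = 1"
    using lorentz unfolding lorentzian_def has_signature_def by auto
  obtain J where J: "linear J" "\<And>x y. g (J x) y = heis_form B z x y"
    using pseudo_inner_represents[OF g(1) heisenberg_centre.bilinear_\<omega>[OF gen]] by blast
  interpret heisenberg_metric B z g J
    unfolding heisenberg_metric_def heisenberg_metric_axioms_def using gen g(1) J by blast
  show ?thesis by (rule lorentzian_ricci_flat_DIM_le_3[OF g(2) flat])
qed

lemma heisenberg_ricci_flat_metric_exists:
  fixes B :: "'v::euclidean_space \<Rightarrow> 'v \<Rightarrow> 'v" and s :: "nat \<Rightarrow> real"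
  assumes gen: "heisenberg_centre B z" and dim: "DIM('v) = 2 * k + 1" and "1 \<le> k"
    and "\<And>i. s i = 1 \<or> s i = -1"
  obtains g where "ricci_flat B g" "pseudo_inner g"
    "neg_index g = 1 + (if s 1 = 1 then 1 else 0) + 2 * card {i\<in>{1..<k}. s i = -1}"
proof -
  interpret heisenberg_centre B z by (rule gen)
  obtain e f where "darboux k e f" using darboux_exists[of k] dim by auto
  then interpret ricci_flat_construction B z k e f s "sqrt (real k - 1)"
    using gen assms by (intro ricci_flat_construction.intro ricci_flat_construction_axioms.intro) auto
  show thesis by (rule that[OF ricci_flat_metric])
qed

lemma heisenberg_ricci_flat_lorentzian_exists:
  fixes B :: "'v::euclidean_space \<Rightarrow> 'v \<Rightarrow> 'v"
  assumes gen: "heisenberg_centre B z" and dim: "DIM('v) = 3"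
  shows "\<exists>g. lorentzian g \<and> ricci_flat B g"
proof -
  obtain g where "ricci_flat B g" "pseudo_inner g"
    "neg_index g = 1 + (if (-1::real) = 1 then 1 else 0) + 2 * card {i\<in>{1..<1::nat}. (-1::real) = -1}"
    using heisenberg_ricci_flat_metric_exists[OF gen, of 1 "\<lambda>_. -1"] dim by auto
  then show ?thesis using dim unfolding lorentzian_def has_signature_def by auto
qed

text \<open>Index \<open>q\<close> is reached by taking \<open>s\<^sub>i = -1\<close> exactly on \<open>lo \<le> i < lo + (q - 1) div 2\<close>,
  where \<open>lo = 2\<close> for even \<open>q\<close> (so that \<open>s\<^sub>1 = 1\<close>) and \<open>lo = 1\<close> for odd \<open>q\<close>.\<close>
lemma heisenberg_ricci_flat_signature_exists:
  fixes B :: "'v::euclidean_space \<Rightarrow> 'v \<Rightarrow> 'v"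
  assumes gen: "heisenberg_centre B z" and dim: "DIM('v) = 2 * k + 1" and q: "2 \<le> q" "q \<le> 2 * k - 1"
  shows "\<exists>g. has_signature g q (2 * k + 1 - q) \<and> ricci_flat B g"
proof -
  define m where "m = (q - 1) div 2"
  define lo where "lo = (if even q then 2 else 1 :: nat)"
  define s where "s i = (if lo \<le> i \<and> i < lo + m then -1 else (1::real))" for i
  have q_eq: "q = 1 + (if even q then 1 else 0) + 2 * m"
    unfolding m_def using q by (cases "even q"; simp; presburger)
  have lo_m: "lo + m \<le> k"
    unfolding m_def lo_def using q by (cases "even q"; simp; presburger)
  have "lo \<le> 1 \<and> 1 < lo + m \<longleftrightarrow> odd q"
    unfolding m_def lo_def using q by (cases "even q"; simp; presburger)
  then have s_1: "s 1 = 1 \<longleftrightarrow> even q" by (simp add: s_def)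
  have "{i\<in>{1..<k}. s i = -1} = {lo..<lo + m}"
    using lo_m by (auto simp: s_def lo_def)
  then have "1 + (if s 1 = 1 then 1 else 0) + 2 * card {i\<in>{1..<k}. s i = -1} = q"
    using q_eq s_1 by simp
  moreover have "1 \<le> k" "\<And>i. s i = 1 \<or> s i = -1" using q by (auto simp: s_def)
  then obtain g where "ricci_flat B g" "pseudo_inner g"
    "neg_index g = 1 + (if s 1 = 1 then 1 else 0) + 2 * card {i\<in>{1..<k}. s i = -1}"
    by (rule heisenberg_ricci_flat_metric_exists[OF gen dim])
  ultimately show ?thesis using dim q unfolding has_signature_def by auto
qed

theorem mainTheorem7:
  fixes B :: "'v::euclidean_space \<Rightarrow> 'v \<Rightarrow> 'v" and k :: nat
  assumes "heisenberg B" and "DIM('v) = 2 * k + 1" and "k \<ge> 1"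
  shows "((\<exists>g. lorentzian g \<and> ricci_flat B g) \<longleftrightarrow> k = 1) \<and>
         (\<forall>q. 2 \<le> q \<and> q \<le> k \<longrightarrow>
            (\<exists>g. has_signature g q (2 * k + 1 - q) \<and> ricci_flat B g))"
proof -
  obtain z where gen: "heisenberg_centre B z" using heisenberg_obtain_centre[OF assms(1)] .
  have "(\<exists>g. lorentzian g \<and> ricci_flat B g) \<longleftrightarrow> k = 1"
  proof
    assume "\<exists>g. lorentzian g \<and> ricci_flat B g"
    then have "DIM('v) \<le> 3" using heisenberg_lorentzian_ricci_flat_DIM_le_3[OF gen] by blast
    then show "k = 1" using assms(2,3) by simp
  next
    assume "k = 1"
    then show "\<exists>g. lorentzian g \<and> ricci_flat B g"
      using heisenberg_ricci_flat_lorentzian_exists[OF gen] assms(2) by simp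
  qed
  moreover have "\<exists>g. has_signature g q (2 * k + 1 - q) \<and> ricci_flat B g" if "2 \<le> q" "q \<le> k" for q
    using heisenberg_ricci_flat_signature_exists[OF gen assms(2)] that by simp
  ultimately show ?thesis by blast
qed

end
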